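(* For any $k=0,1,2,\dots$, suppose (1) $K_2^{(k,0)} \in \mathcal{K}[A_{(k)},C_{1,(k)},\dots,C_{r,(k)}; B_2,D_{1,2},\dots, D_{r,2}]$; (2) there exist matrices $E_{l,(k)}$ ($0 \leq l \leq r$) such that $\sum_{l=0}^{r} E_{l,(k)}^\top E_{l,(k)} = M_{(k)}$ and the system $\left[E_{0,(k)}, E_{1,(k)}, \dotsb, E_{r,(k)}; A_{(k)}, C_{1,(k)}, \dotsb, C_{r,(k)}\right]$ is stochastically detectable. Then all the policies $\{K_2^{(k,j)}\}_{j=1}^\infty$ produced by the policy-improvement update are stabilizers of the system $[A_{(k)},C_{1,(k)},\dots,C_{r,(k)}; B_2,D_{1,2},\dots, D_{r,2}]$, i.e. $K_2^{(k,j)}\in \mathcal{K}[A_{(k)},C_{1,(k)},\dots,C_{r,(k)}; B_2,D_{1,2},\dots, D_{r,2}]$ for all $j=0,1,2,\dots$. Moreover, the solution $Z^{(k,j+1)} \in \overline{\mathbb{S}}_{+}^n$ of the policy-evaluation equation is unique.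
   Context: Fix $k$ and matrices $A_{(k)},C_{l,(k)}\in\mathbb{R}^{n\times n}$ ($1\le l\le r$), $B_2,D_{l,2}\in\mathbb{R}^{n\times m_2}$, $M_{(k)}\in\mathbb{S}^n$, and $R_{22,(k)}\in\mathbb{S}^{m_2}$, $R_{22,(k)}\succ0$ (in the setting $R_{22,(k)}=R_{22}+\sum_lD_{l,2}^\top P^{(k)}D_{l,2}$). A system $(\bar A,\bar C_1,\dots,\bar C_r)$, i.e. $dX=\bar AXdt+\sum_{l=1}^r\bar C_lXdw_l$ with $(w_1,\dots,w_r)$ a standard Brownian motion, is mean-square stable if $\mathbb{E}|X(t)|^2\to0$ for every initial state. $\mathcal{K}[\bar A,\bar C_1,\dots,\bar C_r;\bar B,\bar D_1,\dots,\bar D_r]$ denotes the set of all $\Theta$ such that $(\bar A+\bar B\Theta,\bar C_1+\bar D_1\Theta,\dots,\bar C_r+\bar D_r\Theta)$ is mean-square stable. The system $[E_0,\dots,E_r;\bar A,\bar C_1,\dots,\bar C_r]$ is stochastically detectable if there exists $\varTheta$ with $(\bar A+\varTheta E_0,\bar C_1+\varTheta E_1,\dots,\bar C_r+\varTheta E_r)$ mean-square stable. The inner policy iteration is: given $K_2^{(k,j)}$, policy evaluation finds $Z^{(k,j+1)}$ solving $Z(A_{(k)}+B_2K_2^{(k,j)})+(A_{(k)}+B_2K_2^{(k,j)})^\top Z+\sum_{l=1}^r(C_{l,(k)}+D_{l,2}K_2^{(k,j)})^\top Z(C_{l,(k)}+D_{l,2}K_2^{(k,j)})+M_{(k)}+K_2^{(k,j)\top}R_{22,(k)}K_2^{(k,j)}=0$;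 policy improvement sets $K_2^{(k,j+1)}=-(R_{22,(k)}+\sum_lD_{l,2}^\top Z^{(k,j+1)}D_{l,2})^{-1}(B_2^\top Z^{(k,j+1)}+\sum_lD_{l,2}^\top Z^{(k,j+1)}C_{l,(k)})$. *)

theory Defs
  imports "HOL-Analysis.Analysis"
begin

definition sym_mat :: "real^'n^'n \<Rightarrow> bool" where
  "sym_mat P \<longleftrightarrow> transpose P = P"

definition psd_mat :: "real^'n^'n \<Rightarrow> bool" where
  "psd_mat P \<longleftrightarrow> sym_mat P \<and> (\<forall>x. 0 \<le> x \<bullet> (P *v x))"

definition pd_mat :: "real^'n^'n \<Rightarrow> bool" where
  "pd_mat P \<longleftrightarrow> sym_mat P \<and> (\<forall>x. x \<noteq> 0 \<longrightarrow> 0 < x \<bullet> (P *v x))"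

text \<open>Second-moment generator of the linear SDE
  dX = A X dt + sum_{l=1}^r C_l X dw_l :  if S(t) = E[X(t) X(t)^T] then
  S' = A S + S A^T + sum_l C_l S C_l^T, and E|X(t)|^2 = trace S(t).\<close>
definition moment_op :: "real^'n^'n \<Rightarrow> (nat \<Rightarrow> real^'n^'n) \<Rightarrow> nat \<Rightarrow> real^'n^'n \<Rightarrow> real^'n^'n" where
  "moment_op A C r S = A ** S + S ** transpose A + (\<Sum>l=1..r. C l ** S ** transpose (C l))"

text \<open>Mean-square stability of (A, C_1, ..., C_r): for every initial state x0,
  E|X(t)|^2 = trace S(t) tends to 0, where S is the second moment matrix,
  S(0) = x0 x0^T.\<close>
definition ms_stable :: "real^'n^'n \<Rightarrow> (nat \<Rightarrow> real^'n^'n) \<Rightarrow> nat \<Rightarrow> bool" where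
  "ms_stable A C r \<longleftrightarrow>
     (\<forall>(x0::real^'n) (S::real \<Rightarrow> real^'n^'n).
        S 0 = (\<chi> i j. x0 $ i * x0 $ j) \<and>
        (\<forall>t\<ge>0. (S has_vector_derivative moment_op A C r (S t)) (at t within {0..}))
        \<longrightarrow> ((\<lambda>t. trace (S t)) \<longlongrightarrow> 0) at_top)"

definition stabilizers ::
  "real^'n^'n \<Rightarrow> (nat \<Rightarrow> real^'n^'n) \<Rightarrow> real^'m^'n \<Rightarrow> (nat \<Rightarrow> real^'m^'n) \<Rightarrow> nat \<Rightarrow> (real^'n^'m) set" where
  "stabilizers A C B D r = {\<Theta>. ms_stable (A + B ** \<Theta>) (\<lambda>l. C l + D l ** \<Theta>) r}"

definition stoch_detectable ::
  "(nat \<Rightarrow> real^'n^'p) \<Rightarrow> real^'n^'n \<Rightarrow> (nat \<Rightarrow> real^'n^'n) \<Rightarrow> nat \<Rightarrow> bool" where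
  "stoch_detectable E A C r \<longleftrightarrow>
     (\<exists>\<Theta>::real^'p^'n. ms_stable (A + \<Theta> ** E 0) (\<lambda>l. C l + \<Theta> ** E l) r)"

definition policy_eval_eq ::
  "real^'n^'n \<Rightarrow> (nat \<Rightarrow> real^'n^'n) \<Rightarrow> real^'m^'n \<Rightarrow> (nat \<Rightarrow> real^'m^'n) \<Rightarrow> nat
   \<Rightarrow> real^'n^'n \<Rightarrow> real^'m^'m \<Rightarrow> real^'n^'m \<Rightarrow> real^'n^'n \<Rightarrow> bool" where
  "policy_eval_eq A C B D r M R K Z \<longleftrightarrow>
     Z ** (A + B ** K) + transpose (A + B ** K) ** Z
     + (\<Sum>l=1..r. transpose (C l + D l ** K) ** Z ** (C l + D l ** K))
     + M + transpose K ** R ** K = 0"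

definition policy_improve ::
  "real^'n^'n \<Rightarrow> (nat \<Rightarrow> real^'n^'n) \<Rightarrow> real^'m^'n \<Rightarrow> (nat \<Rightarrow> real^'m^'n) \<Rightarrow> nat
   \<Rightarrow> real^'m^'m \<Rightarrow> real^'n^'n \<Rightarrow> real^'n^'m" where
  "policy_improve A C B D r R Z =
     - (matrix_inv (R + (\<Sum>l=1..r. transpose (D l) ** Z ** D l))
        ** (transpose B ** Z + (\<Sum>l=1..r. transpose (D l) ** Z ** C l)))"

end

theory Submission
  imports Defs
begin

text \<open>Write \<open>\<L>\<^sub>K\<close> for the Lyapunov operator
  \<open>Z \<mapsto> Z (A + B K) + (A + B K)\<^sup>T Z + \<Sum>\<^sub>l (C\<^sub>l + D\<^sub>l K)\<^sup>T Z (C\<^sub>l + D\<^sub>l K)\<close>;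
  it is the Frobenius adjoint of the generator of the second-moment equation of the closed loop.
  If the closed loop is mean-square stable and \<open>Q \<succeq> 0\<close>, then \<open>\<L>\<^sub>K Y + Q = 0\<close> has exactly one
  solution, and it is positive semidefinite: along a moment trajectory \<open>S(t) \<succeq> 0\<close> starting at
  \<open>x x\<^sup>T\<close> the pairing \<open>\<langle>S(t), Y\<rangle>\<close> is nonincreasing and tends to \<open>0\<close>, so \<open>x\<^sup>T Y x \<ge> 0\<close>.
  Injectivity of \<open>\<L>\<^sub>K\<close> on skew-symmetric matrices is the delicate point; it follows because the
  moment flow also preserves positivity of complex Hermitian matrices \<open>X - i W\<close>, which is shown by
  a first-hitting-time argument.

  Hence a stabilizing \<open>K\<^sub>j\<close> yields \<open>Z\<^sub>j\<^sub>+\<^sub>1 \<succeq> 0\<close>. For the improved gain \<open>K'\<close>, completing the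
  square gives \<open>\<L>\<^sub>K\<^sub>' Z \<preceq> -M - K'\<^sup>T R K'\<close>. Detectability provides \<open>P \<succ> 0\<close> with \<open>\<L>\<^sub>\<Theta> P = -I\<close>
  for the output-injection loop, and a perturbation estimate shows that \<open>Z + \<epsilon> P\<close> is a strict
  Lyapunov function of the \<open>K'\<close>-loop for small \<open>\<epsilon>\<close>; hence \<open>E|X(t)|\<^sup>2\<close> decays exponentially.\<close>

section \<open>Exponentials of bounded linear endomorphisms\<close>

text \<open>\<open>exp\<close> needs a type of class \<open>real_normed_algebra_1\<close>; the endomorphisms \<open>'a \<Rightarrow>\<^sub>L 'a\<close> are made
  into one so that linear ODEs can be solved by the exponential series.\<close>

typedef (overloaded) ('a::"{real_normed_vector,perfect_space}") endo = "UNIV :: ('a \<Rightarrow>\<^sub>L 'a) set"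
  morphisms endo_of Endo by simp

setup_lifting type_definition_endo

instantiation endo :: ("{real_normed_vector,perfect_space}") real_normed_algebra_1
begin
lift_definition norm_endo :: "'a endo \<Rightarrow> real" is norm .
lift_definition minus_endo :: "'a endo \<Rightarrow> 'a endo \<Rightarrow> 'a endo" is "(-)" .
lift_definition plus_endo :: "'a endo \<Rightarrow> 'a endo \<Rightarrow> 'a endo" is "(+)" .
lift_definition uminus_endo :: "'a endo \<Rightarrow> 'a endo" is uminus .
lift_definition zero_endo :: "'a endo" is 0 .
lift_definition one_endo :: "'a endo" is id_blinfun .
lift_definition times_endo :: "'a endo \<Rightarrow> 'a endo \<Rightarrow> 'a endo" is "(o\<^sub>L)" .
lift_definition scaleR_endo :: "real \<Rightarrow> 'a endo \<Rightarrow> 'a endo" is scaleR .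
definition dist_endo :: "'a endo \<Rightarrow> 'a endo \<Rightarrow> real" where "dist_endo a b = norm (a - b)"
definition uniformity_endo :: "('a endo \<times> 'a endo) filter" where
  "uniformity_endo = (INF e\<in>{0 <..}. principal {(x, y). dist x y < e})"
definition open_endo :: "'a endo set \<Rightarrow> bool"
  where "open_endo S = (\<forall>x\<in>S. \<forall>\<^sub>F (x', y) in uniformity. x' = x \<longrightarrow> y \<in> S)"
definition sgn_endo :: "'a endo \<Rightarrow> 'a endo" where "sgn_endo x = scaleR (inverse (norm x)) x"
instance
proof
  fix a b c :: "'a endo" and r s :: real
  show "a * b * c = a * (b * c)" by transfer (auto intro!: blinfun_eqI)
  show "1 * a = a" by transfer (auto intro!: blinfun_eqI)
  show "a * 1 = a" by transfer (auto intro!: blinfun_eqI)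
  show "(a + b) * c = a * c + b * c" by transfer (auto intro!: blinfun_eqI simp: blinfun.bilinear_simps)
  show "a * (b + c) = a * b + a * c" by transfer (auto intro!: blinfun_eqI simp: blinfun.bilinear_simps)
  show "(0::'a endo) \<noteq> 1"
    by transfer (metis norm_blinfun_id norm_zero zero_neq_one)
  show "scaleR r a * b = scaleR r (a * b)" by transfer (auto intro!: blinfun_eqI simp: blinfun.bilinear_simps)
  show "a * scaleR r b = scaleR r (a * b)" by transfer (auto intro!: blinfun_eqI simp: blinfun.bilinear_simps)
  show "norm (a * b) \<le> norm a * norm b" by transfer (rule norm_blinfun_compose)
  show "norm (1::'a endo) = 1" by transfer simp
  show "a + b + c = a + (b + c)" by transfer simp
  show "a + b = b + a" by transfer simp
  show "0 + a = a" by transfer simp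
  show "- a + a = 0" by transfer simp
  show "a - b = a + - b" by transfer simp
  show "r *\<^sub>R (a + b) = r *\<^sub>R a + r *\<^sub>R b" by transfer (simp add: scaleR_right_distrib)
  show "(r + s) *\<^sub>R a = r *\<^sub>R a + s *\<^sub>R a" by transfer (simp add: scaleR_left_distrib)
  show "r *\<^sub>R s *\<^sub>R a = (r * s) *\<^sub>R a" by transfer simp
  show "1 *\<^sub>R a = a" by transfer simp
  show "dist a b = norm (a - b)" by (simp add: dist_endo_def)
  show "sgn a = inverse (norm a) *\<^sub>R a" by (simp add: sgn_endo_def)
  show "(uniformity :: ('a endo \<times> 'a endo) filter) = (INF e\<in>{0 <..}. principal {(x, y). dist x y < e})"
    by (simp add: uniformity_endo_def)
  fix U :: "'a endo set"
  show "open U = (\<forall>x\<in>U. \<forall>\<^sub>F (x', y) in uniformity. x' = x \<longrightarrow> y \<in> U)"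
    by (simp add: open_endo_def)
  show "(norm a = 0) = (a = 0)" by transfer simp
  show "norm (a + b) \<le> norm a + norm b" by transfer (rule norm_triangle_ineq)
  show "norm (r *\<^sub>R a) = \<bar>r\<bar> * norm a" by transfer simp
qed
end

instance endo :: ("{real_normed_vector,perfect_space,banach}") banach
proof
  fix X :: "nat \<Rightarrow> 'a endo"
  assume "Cauchy X"
  have dist_eq: "dist (X m) (X n) = dist (endo_of (X m)) (endo_of (X n))" for m n
    by (simp add: dist_norm norm_endo.rep_eq minus_endo.rep_eq)
  have "Cauchy (\<lambda>n. endo_of (X n))"
    using \<open>Cauchy X\<close> unfolding Cauchy_def dist_eq .
  then obtain l where l: "(\<lambda>n. endo_of (X n)) \<longlonglongrightarrow> l"
    using convergent_def Cauchy_convergent_iff by blast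
  have "X \<longlonglongrightarrow> Endo l"
    using l unfolding tendsto_iff
    by (simp add: dist_norm norm_endo.rep_eq minus_endo.rep_eq Endo_inverse)
  then show "convergent X" by (auto simp: convergent_def)
qed

lemma linear_ode_exists:
  fixes f :: "'a::{real_normed_vector,perfect_space,banach} \<Rightarrow> 'a"
  assumes "bounded_linear f"
  shows "\<exists>S. S 0 = X \<and> (\<forall>t. (S has_vector_derivative f (S t)) (at t within T))"
proof -
  define L where "L = Endo (Blinfun f)"
  have eL: "blinfun_apply (endo_of L) = f"
    unfolding L_def using assms by (simp add: Endo_inverse bounded_linear_Blinfun_apply)
  define S where "S t = blinfun_apply (endo_of (exp (t *\<^sub>R L))) X" for t
  have bl: "bounded_linear (\<lambda>E. blinfun_apply (endo_of E) X)"
    by (rule bounded_linear_intro[where K="norm X"])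
      (auto simp: plus_endo.rep_eq scaleR_endo.rep_eq blinfun.bilinear_simps norm_endo.rep_eq
        intro: order_trans[OF norm_blinfun] simp: mult.commute)
  have "(S has_vector_derivative blinfun_apply (endo_of (L * exp (t *\<^sub>R L))) X) (at t within T)" for t
    unfolding S_def
    by (rule bounded_linear.has_vector_derivative[OF bl])
      (rule has_vector_derivative_at_within[OF exp_scaleR_has_vector_derivative_left])
  moreover have "blinfun_apply (endo_of (L * exp (t *\<^sub>R L))) X = f (S t)" for t
    by (simp add: S_def times_endo.rep_eq eL)
  moreover have "S 0 = X" by (simp add: S_def one_endo.rep_eq)
  ultimately show ?thesis by metis
qed

declare transpose_matrix_vector [simp del]

lemma matrix_add_rdistrib: "((A::'a::semiring_1^'n^'m) + B) ** C = A ** C + B ** C"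
  by (simp add: matrix_matrix_mult_def vec_eq_iff sum.distrib distrib_right)

lemma matrix_scaleR_left: "((c::real) *\<^sub>R (A::real^'n^'m)) ** B = c *\<^sub>R (A ** B)"
  by (simp add: matrix_matrix_mult_def vec_eq_iff sum_distrib_left mult_ac)

lemma matrix_scaleR_right: "(A::real^'n^'m) ** ((c::real) *\<^sub>R B) = c *\<^sub>R (A ** B)"
  by (simp add: matrix_matrix_mult_def vec_eq_iff sum_distrib_left mult_ac)

lemma matrix_neg_right: "(A::'a::ring_1^'n^'m) ** (- B) = - (A ** B)"
  by (simp add: matrix_matrix_mult_def vec_eq_iff sum_negf)

lemma matrix_mul_matrix_inv: "invertible (A::'a::semiring_1^'n^'n) \<Longrightarrow> A ** matrix_inv A = mat 1"
  unfolding invertible_def matrix_inv_def by (rule someI2_ex) auto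

lemma transpose_add: "transpose ((X::'a::semiring_1^'n^'m) + Y) = transpose X + transpose Y"
  by (simp add: transpose_def vec_eq_iff)

lemma transpose_sum: "transpose (sum (f::'i \<Rightarrow> 'a::semiring_1^'n^'m) I) = (\<Sum>i\<in>I. transpose (f i))"
  by (induction I rule: infinite_finite_induct) (auto simp: transpose_add transpose_def vec_eq_iff)

lemma transpose_zero [simp]: "transpose (0::'a::semiring_1^'n^'m) = 0"
  by (simp add: transpose_def vec_eq_iff)

lemma matrix_vector_mult_sum_left: "(sum (f::'i \<Rightarrow> real^'n^'m) I) *v x = (\<Sum>i\<in>I. f i *v x)"
  by (induction I rule: infinite_finite_induct) (auto simp: matrix_vector_mult_add_rdistrib)

lemma matrix_vector_mult_scaleR_left: "((c::real) *\<^sub>R (X::real^'n^'m)) *v a = c *\<^sub>R (X *v a)"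
  by (simp add: matrix_vector_mult_def vec_eq_iff sum_distrib_left mult_ac)

lemma matrix_vector_mult_neg_left: "(- (X::real^'n^'m)) *v v = - (X *v v)"
  by (simp add: matrix_vector_mult_def vec_eq_iff sum_negf)

lemma matrix_vector_mult_neg_right: "(X::real^'n^'m) *v (- v) = - (X *v v)"
  by (simp add: matrix_vector_mult_def vec_eq_iff sum_negf)

lemma inner_matrix_vector_transpose: "((A::real^'n^'m) *v x) \<bullet> y = x \<bullet> (transpose A *v y)"
  by (metis dot_lmul_matrix inner_commute transpose_matrix_vector)

lemma inner_sym_matrix_commute: "transpose (Z::real^'n^'n) = Z \<Longrightarrow> x \<bullet> (Z *v y) = y \<bullet> (Z *v x)"
  by (metis inner_commute inner_matrix_vector_transpose)

lemma inner_matrix_axis: "axis i 1 \<bullet> ((X::real^'n^'n) *v axis j 1) = X$i$j"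
  by (simp add: inner_axis' matrix_vector_mult_basis column_def)

lemma norm_matrix_vector_mult_le: "norm ((M::real^'n^'m) *v x) \<le> norm M * norm x"
proof -
  have row: "(M *v x)$i = M$i \<bullet> x" for i
    by (simp add: matrix_vector_mult_def inner_vec_def)
  have "norm (M *v x)^2 = (\<Sum>i\<in>UNIV. (M$i \<bullet> x)^2)"
    unfolding power2_norm_eq_inner by (simp add: inner_vec_def[of "M *v x"] row power2_eq_square)
  also have "\<dots> \<le> (\<Sum>i\<in>UNIV. norm (M$i)^2 * norm x^2)"
    by (intro sum_mono)
      (metis Cauchy_Schwarz_ineq2 abs_ge_zero power_mono power_mult_distrib power2_abs)
  also have "\<dots> = (norm M * norm x)^2"
    by (simp add: power2_norm_eq_inner[of M] inner_vec_def sum_distrib_right power2_norm_eq_inner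
        power_mult_distrib)
  finally show ?thesis by (rule power2_le_imp_le) simp
qed

lemma abs_quadratic_form_le: "\<bar>x \<bullet> ((M::real^'n^'n) *v x)\<bar> \<le> norm M * (x \<bullet> x)"
proof -
  have "\<bar>x \<bullet> (M *v x)\<bar> \<le> norm x * norm (M *v x)" by (rule Cauchy_Schwarz_ineq2)
  also have "\<dots> \<le> norm x * (norm M * norm x)" by (intro mult_left_mono norm_matrix_vector_mult_le) simp
  finally show ?thesis by (simp add: power2_norm_eq_inner[symmetric] power2_eq_square mult_ac)
qed

lemma inner_matrix_eq: "(X::real^'n^'m) \<bullet> Y = (\<Sum>i\<in>UNIV. \<Sum>j\<in>UNIV. X$i$j * Y$i$j)"
  by (simp add: inner_vec_def)

lemma trace_eq_inner_mat_1: "trace (S::real^'n^'n) = S \<bullet> mat 1"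
  by (simp add: trace_def inner_matrix_eq mat_def if_distrib sum.delta cong: if_cong)

lemma sum3_swap: "(\<Sum>i\<in>I. \<Sum>j\<in>J. \<Sum>k\<in>K. f i j k) = (\<Sum>k\<in>K. \<Sum>j\<in>J. \<Sum>i\<in>I. f i j k)"
proof -
  have "(\<Sum>i\<in>I. \<Sum>j\<in>J. \<Sum>k\<in>K. f i j k) = (\<Sum>i\<in>I. \<Sum>k\<in>K. \<Sum>j\<in>J. f i j k)"
    by (rule sum.cong[OF refl], rule sum.swap)
  also have "\<dots> = (\<Sum>k\<in>K. \<Sum>i\<in>I. \<Sum>j\<in>J. f i j k)" by (rule sum.swap)
  also have "\<dots> = (\<Sum>k\<in>K. \<Sum>j\<in>J. \<Sum>i\<in>I. f i j k)"
    by (rule sum.cong[OF refl], rule sum.swap)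
  finally show ?thesis .
qed

lemma inner_matrix_mult_left: "((A::real^'k^'n) ** (S::real^'m^'k)) \<bullet> Z = S \<bullet> (transpose A ** Z)"
proof -
  have "(A ** S) \<bullet> Z = (\<Sum>i\<in>UNIV. \<Sum>j\<in>UNIV. \<Sum>k\<in>UNIV. A$i$k * S$k$j * Z$i$j)"
    by (simp add: inner_matrix_eq matrix_matrix_mult_def sum_distrib_right)
  also have "\<dots> = (\<Sum>k\<in>UNIV. \<Sum>j\<in>UNIV. \<Sum>i\<in>UNIV. A$i$k * S$k$j * Z$i$j)"
    by (rule sum3_swap)
  also have "\<dots> = S \<bullet> (transpose A ** Z)"
    by (simp add: inner_matrix_eq matrix_matrix_mult_def transpose_def sum_distrib_left mult_ac)
  finally show ?thesis .
qed

lemma inner_matrix_mult_right: "((S::real^'k^'n) ** (B::real^'m^'k)) \<bullet> Z = S \<bullet> (Z ** transpose B)"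
proof -
  have "(S ** B) \<bullet> Z = (\<Sum>i\<in>UNIV. \<Sum>j\<in>UNIV. \<Sum>k\<in>UNIV. S$i$k * B$k$j * Z$i$j)"
    by (simp add: inner_matrix_eq matrix_matrix_mult_def sum_distrib_right)
  also have "\<dots> = (\<Sum>i\<in>UNIV. \<Sum>k\<in>UNIV. \<Sum>j\<in>UNIV. S$i$k * B$k$j * Z$i$j)"
    by (rule sum.cong[OF refl], rule sum.swap)
  also have "\<dots> = S \<bullet> (Z ** transpose B)"
    by (simp add: inner_matrix_eq matrix_matrix_mult_def transpose_def sum_distrib_left mult_ac)
  finally show ?thesis .
qed

definition outer :: "real^'n \<Rightarrow> real^'m \<Rightarrow> real^'m^'n" where
  "outer x y = (\<chi> i j. x $ i * y $ j)"

lemma outer_matrix_vector_mult: "outer a b *v x = (b \<bullet> x) *\<^sub>R a"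
  by (simp add: outer_def matrix_vector_mult_def vec_eq_iff inner_vec_def sum_distrib_left mult_ac)

lemma inner_outer_matrix_vector_mult: "x \<bullet> (outer a b *v y) = (a \<bullet> x) * (b \<bullet> y)"
  by (simp add: outer_matrix_vector_mult inner_commute)

lemma inner_outer: "(X::real^'m^'n) \<bullet> outer a b = a \<bullet> (X *v b)"
  by (simp add: inner_matrix_eq outer_def inner_vec_def matrix_vector_mult_def sum_distrib_left
      mult_ac)

lemma transpose_outer: "transpose (outer a b) = outer b a"
  by (simp add: outer_def transpose_def vec_eq_iff)

lemma quadratic_form_sum_transpose_mult:
  "x \<bullet> ((\<Sum>l\<in>I. transpose (E l) ** E l) *v x) = (\<Sum>l\<in>I. (norm ((E l :: real^'n^'p) *v x))^2)"
  by (simp add: matrix_vector_mult_sum_left inner_sum_right power2_norm_eq_inner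
      inner_matrix_vector_transpose flip: matrix_vector_mul_assoc)

lemma quadratic_form_congruence:
  "x \<bullet> ((transpose K ** R ** K) *v x) = ((K::real^'n^'m) *v x) \<bullet> (R *v (K *v x))"
  by (simp add: inner_matrix_vector_transpose flip: matrix_vector_mul_assoc)

section \<open>Positive semidefinite matrices\<close>

lemma psd_matD:
  assumes "psd_mat P"
  shows "transpose P = P" "0 \<le> x \<bullet> (P *v x)"
  using assms by (auto simp: psd_mat_def sym_mat_def)

lemma pd_mat_imp_psd_mat:
  assumes "pd_mat P"
  shows "psd_mat P"
proof -
  have "0 \<le> x \<bullet> (P *v x)" for x
    using assms by (cases "x = 0") (auto simp: pd_mat_def intro: less_imp_le)
  then show ?thesis using assms by (simp add: pd_mat_def psd_mat_def)
qed

lemma quadratic_nonneg_imp_discriminant_le: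
  fixes a b c :: real
  assumes nonneg: "\<And>s. 0 \<le> a + 2 * s * b + s^2 * c" and "0 \<le> c"
  shows "b^2 \<le> a * c"
proof (cases "c = 0")
  case True
  have "b = 0"
  proof (rule ccontr)
    assume "b \<noteq> 0"
    have "0 \<le> a + 2 * (-(\<bar>a\<bar> + 1) / b) * b" using nonneg[of "-(\<bar>a\<bar> + 1) / b"] True by simp
    also have "\<dots> = a - 2 * (\<bar>a\<bar> + 1)" using \<open>b \<noteq> 0\<close> by (simp add: field_simps)
    finally show False by (smt (verit) abs_ge_self abs_ge_minus_self)
  qed
  then show ?thesis using True by simp
next
  case False
  then have "c > 0" using \<open>0 \<le> c\<close> by simp
  have "0 \<le> a + 2 * (-b/c) * b + (-b/c)^2 * c" by (rule nonneg)
  also have "\<dots> = a - b^2 / c" using \<open>c > 0\<close> by (simp add: field_simps power2_eq_square)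
  finally show ?thesis using \<open>c > 0\<close> by (simp add: field_simps)
qed

lemma psd_mat_cauchy_schwarz:
  fixes Y :: "real^'n^'n"
  assumes "psd_mat Y"
  shows "(x \<bullet> (Y *v y))^2 \<le> (x \<bullet> (Y *v x)) * (y \<bullet> (Y *v y))"
proof (rule quadratic_nonneg_imp_discriminant_le)
  have "y \<bullet> (Y *v x) = x \<bullet> (Y *v y)"
    using inner_sym_matrix_commute psd_matD(1)[OF assms] by metis
  then have "(x + s *\<^sub>R y) \<bullet> (Y *v (x + s *\<^sub>R y))
      = x \<bullet> (Y *v x) + 2 * s * (x \<bullet> (Y *v y)) + s^2 * (y \<bullet> (Y *v y))" for s
    by (simp add: matrix_vector_right_distrib inner_add_left inner_add_right
        matrix_vector_mult_scaleR power2_eq_square algebra_simps)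
  then show "0 \<le> x \<bullet> (Y *v x) + 2 * s * (x \<bullet> (Y *v y)) + s^2 * (y \<bullet> (Y *v y))" for s
    by (metis psd_matD(2)[OF assms])
qed (rule psd_matD(2)[OF assms])

lemma psd_mat_quadratic_form_eq_0:
  fixes Y :: "real^'n^'n"
  assumes "psd_mat Y" "x \<bullet> (Y *v x) = 0"
  shows "Y *v x = 0"
proof -
  have "((Y *v x) \<bullet> (Y *v x))^2 \<le> ((Y *v x) \<bullet> (Y *v (Y *v x))) * (x \<bullet> (Y *v x))"
    by (rule psd_mat_cauchy_schwarz[OF assms(1)])
  then show ?thesis using assms(2) by simp
qed

lemma psd_mat_diag_eq_0_column:
  fixes Y :: "real^'n^'n"
  assumes "psd_mat Y" "Y$i$i = 0"
  shows "Y$a$i = 0"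
proof -
  have "Y *v axis i 1 = 0"
    using psd_mat_quadratic_form_eq_0[OF assms(1)] assms(2) by (simp add: inner_matrix_axis)
  then show ?thesis by (metis column_def matrix_vector_mult_basis vec_lambda_beta zero_index)
qed

text \<open>One step of the Cholesky factorization.\<close>

lemma psd_mat_minus_outer_column:
  fixes Y :: "real^'n^'n"
  assumes psd: "psd_mat Y" and pos: "0 < Y$i$i"
  defines "v \<equiv> \<chi> a. Y$a$i / sqrt (Y$i$i)"
  shows "psd_mat (Y - outer v v)"
    and "(Y - outer v v)$a$b = Y$a$b - Y$a$i * Y$b$i / Y$i$i"
proof -
  have sym: "Y$a$b = Y$b$a" for a b
    using psd_matD(1)[OF psd] by (metis transpose_def vec_lambda_beta)
  show entry: "(Y - outer v v)$a$b = Y$a$b - Y$a$i * Y$b$i / Y$i$i" for a b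
    using pos by (simp add: outer_def v_def real_sqrt_mult[symmetric])
  have "x \<bullet> v = (x \<bullet> (Y *v axis i 1)) / sqrt (Y$i$i)" for x
    by (simp add: inner_vec_def v_def sum_divide_distrib matrix_vector_mult_basis column_def)
  then have "v \<bullet> x = (x \<bullet> (Y *v axis i 1)) / sqrt (Y$i$i)" for x
    by (metis inner_commute)
  then have "x \<bullet> ((Y - outer v v) *v x) = x \<bullet> (Y *v x) - (x \<bullet> (Y *v axis i 1))^2 / Y$i$i" for x
    using pos
    by (simp add: matrix_vector_mult_diff_rdistrib inner_diff_right inner_outer_matrix_vector_mult
        power_divide flip: power2_eq_square)
  moreover have "(x \<bullet> (Y *v axis i 1))^2 / Y$i$i \<le> x \<bullet> (Y *v x)" for x
    using psd_mat_cauchy_schwarz[OF psd, of x "axis i 1"] pos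
    by (simp add: inner_matrix_axis field_simps)
  ultimately have "0 \<le> x \<bullet> ((Y - outer v v) *v x)" for x
    by simp
  moreover have "transpose (Y - outer v v) = Y - outer v v"
    by (simp add: vec_eq_iff transpose_def outer_def sym mult.commute)
  ultimately show "psd_mat (Y - outer v v)"
    by (simp add: psd_mat_def sym_mat_def)
qed

lemma psd_mat_sum_outer_on:
  fixes I :: "'n::finite set"
  shows "\<forall>Y::real^'n^'n. psd_mat Y \<and> (\<forall>a b. a \<notin> I \<or> b \<notin> I \<longrightarrow> Y$a$b = 0)
     \<longrightarrow> (\<exists>g. Y = (\<Sum>k\<in>I. outer (g k) (g k)))"
proof (induction I rule: finite_induct[OF finite])
  case 1
  then show ?case by (auto simp: vec_eq_iff)
next
  case (2 i I)
  show ?case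
  proof (intro allI impI, elim conjE)
    fix Y :: "real^'n^'n"
    assume psd: "psd_mat Y" and supp: "\<forall>a b. a \<notin> insert i I \<or> b \<notin> insert i I \<longrightarrow> Y$a$b = 0"
    have sym: "Y$a$b = Y$b$a" for a b
      using psd_matD(1)[OF psd] by (metis transpose_def vec_lambda_beta)
    have extend: "(\<Sum>k\<in>insert i I. outer ((g(i:=v)) k) ((g(i:=v)) k))
        = outer v v + (\<Sum>k\<in>I. outer (g k) (g k))" for g :: "'n \<Rightarrow> real^'n" and v
      using "2.hyps" by simp (intro sum.cong refl, auto)
    show "\<exists>g. Y = (\<Sum>k\<in>insert i I. outer (g k) (g k))"
    proof (cases "Y$i$i = 0")
      case True
      then have "Y$a$i = 0" for a by (rule psd_mat_diag_eq_0_column[OF psd])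
      then have "\<forall>a b. a \<notin> I \<or> b \<notin> I \<longrightarrow> Y$a$b = 0"
        using supp sym by (metis insert_iff)
      then obtain g where "Y = (\<Sum>k\<in>I. outer (g k) (g k))" using "2.IH" psd by blast
      then have "Y = (\<Sum>k\<in>insert i I. outer ((g(i:=0)) k) ((g(i:=0)) k))"
        unfolding extend by (simp add: outer_def vec_eq_iff)
      then show ?thesis by blast
    next
      case False
      then have pos: "0 < Y$i$i" using psd_matD(2)[OF psd, of "axis i 1"] by (simp add: inner_matrix_axis)
      define v where "v = (\<chi> a. Y$a$i / sqrt (Y$i$i))"
      have psd': "psd_mat (Y - outer v v)"
        and entry: "(Y - outer v v)$a$b = Y$a$b - Y$a$i * Y$b$i / Y$i$i" for a b
        unfolding v_def by (rule psd_mat_minus_outer_column[OF psd pos])+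
      have "(Y - outer v v)$a$b = 0" if "a \<notin> I \<or> b \<notin> I" for a b
      proof (cases "a = i \<or> b = i")
        case True
        then show ?thesis unfolding entry using pos sym by auto
      next
        case False
        then have "Y$a$b = 0 \<and> (Y$a$i = 0 \<or> Y$b$i = 0)" using supp that by (metis insert_iff)
        then show ?thesis unfolding entry by auto
      qed
      then obtain g where "Y - outer v v = (\<Sum>k\<in>I. outer (g k) (g k))" using "2.IH" psd' by blast
      then have "Y = (\<Sum>k\<in>insert i I. outer ((g(i:=v)) k) ((g(i:=v)) k))"
        unfolding extend by (metis add.commute diff_add_cancel)
      then show ?thesis by blast
    qed
  qed
qed

lemma psd_mat_sum_outer:
  fixes Y :: "real^'n^'n"
  assumes "psd_mat Y"
  obtains g :: "'n \<Rightarrow> real^'n" where "Y = (\<Sum>k\<in>UNIV. outer (g k) (g k))"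
  using psd_mat_sum_outer_on[of UNIV] assms by auto

lemma psd_mat_inner_ge:
  fixes S Y :: "real^'n^'n"
  assumes "psd_mat S" and "\<And>x. c * (x \<bullet> x) \<le> x \<bullet> (Y *v x)"
  shows "c * trace S \<le> S \<bullet> Y"
proof -
  obtain g :: "'n \<Rightarrow> real^'n" where S: "S = (\<Sum>k\<in>UNIV. outer (g k) (g k))"
    using psd_mat_sum_outer[OF assms(1)] by blast
  have inner_S: "S \<bullet> X = (\<Sum>k\<in>UNIV. g k \<bullet> (X *v g k))" for X
    by (simp add: S inner_sum_left inner_commute[of "outer _ _"] inner_outer)
  have "c * trace S = (\<Sum>k\<in>UNIV. c * (g k \<bullet> g k))"
    by (simp add: trace_eq_inner_mat_1 inner_S sum_distrib_left)
  also have "\<dots> \<le> S \<bullet> Y"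
    unfolding inner_S by (intro sum_mono assms(2))
  finally show ?thesis .
qed

lemma psd_mat_inner_nonneg: "psd_mat S \<Longrightarrow> psd_mat Q \<Longrightarrow> 0 \<le> S \<bullet> Q"
  using psd_mat_inner_ge[of S 0 Q] by (simp add: psd_matD)

lemma trace_psd_mat_nonneg: "psd_mat S \<Longrightarrow> 0 \<le> trace S"
  using psd_mat_inner_ge[of S 0 "mat 1"] by (simp add: trace_eq_inner_mat_1)

lemma abs_inner_psd_mat_le:
  fixes S Y :: "real^'n^'n"
  assumes "psd_mat S"
  shows "\<bar>S \<bullet> Y\<bar> \<le> norm Y * trace S"
proof -
  have lower: "(- norm Y) * (x \<bullet> x) \<le> x \<bullet> (Y *v x)" for x :: "real^'n" and Y :: "real^'n^'n"
    using abs_quadratic_form_le[of x Y] by (simp add: abs_le_iff)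
  have "(- norm Y) * trace S \<le> S \<bullet> Y"
    by (rule psd_mat_inner_ge[OF assms lower])
  moreover have "(- norm (- Y)) * trace S \<le> S \<bullet> (- Y)"
    by (rule psd_mat_inner_ge[OF assms lower])
  ultimately show ?thesis by (simp add: abs_le_iff)
qed

lemma quadratic_form_pos_imp_coercive:
  fixes P :: "real^'n^'n"
  assumes pos: "\<And>x. x \<noteq> 0 \<Longrightarrow> 0 < x \<bullet> (P *v x)"
  obtains lam where "0 < lam" "\<And>x. lam * (x \<bullet> x) \<le> x \<bullet> (P *v x)"
proof -
  have "sphere (0::real^'n) 1 \<noteq> {}"
    using norm_axis_1[of "undefined::'n"] by (metis dist_0_norm empty_iff mem_sphere)
  then have "\<exists>x0\<in>sphere 0 1. \<forall>y\<in>sphere 0 1. x0 \<bullet> (P *v x0) \<le> y \<bullet> (P *v y)"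
    by (rule continuous_attains_inf[OF compact_sphere]) (intro continuous_intros)
  then obtain x0 where x0: "x0 \<in> sphere 0 1"
    and min: "\<And>y. y \<in> sphere 0 1 \<Longrightarrow> x0 \<bullet> (P *v x0) \<le> y \<bullet> (P *v y)"
    by blast
  have "x0 \<bullet> (P *v x0) * (x \<bullet> x) \<le> x \<bullet> (P *v x)" for x
  proof (cases "x = 0")
    case False
    define y where "y = x /\<^sub>R norm x"
    have "norm x * (norm x * (inverse (norm x) * inverse (norm x))) = 1"
      using False by (simp add: field_simps)
    then have "x \<bullet> (P *v x) = (norm x)^2 * (y \<bullet> (P *v y))"
      by (simp add: y_def matrix_vector_mult_scaleR power2_eq_square)
    moreover have "x \<bullet> x = (norm x)^2" by (simp add: power2_norm_eq_inner)
    moreover have "x0 \<bullet> (P *v x0) * (norm x)^2 \<le> (y \<bullet> (P *v y)) * (norm x)^2"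
      using False by (intro mult_right_mono min) (simp_all add: y_def)
    ultimately show ?thesis by (simp add: mult.commute)
  qed simp
  moreover have "0 < x0 \<bullet> (P *v x0)" using x0 by (intro pos) auto
  ultimately show ?thesis using that by blast
qed

section \<open>The second-moment equation\<close>

definition lyap_op :: "real^'n^'n \<Rightarrow> (nat \<Rightarrow> real^'n^'n) \<Rightarrow> nat \<Rightarrow> real^'n^'n \<Rightarrow> real^'n^'n" where
  "lyap_op A C r Z = Z ** A + transpose A ** Z + (\<Sum>l=1..r. transpose (C l) ** Z ** C l)"

lemma inner_moment_op: "moment_op A C r S \<bullet> Z = S \<bullet> lyap_op A C r Z"
proof -
  have noise: "(C l ** S ** transpose (C l)) \<bullet> Z = S \<bullet> (transpose (C l) ** Z ** C l)" for l
    using inner_matrix_mult_right[of "C l ** S" "transpose (C l)" Z]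
      inner_matrix_mult_left[of "C l" S "Z ** C l"]
    by (simp add: matrix_mul_assoc)
  show ?thesis
    unfolding moment_op_def lyap_op_def
    using inner_matrix_mult_left[of A S Z] inner_matrix_mult_right[of S "transpose A" Z]
    by (simp only: inner_add_left inner_add_right inner_sum_left inner_sum_right noise
        transpose_transpose add_ac)
qed

lemma transpose_moment_op: "transpose (moment_op A C r S) = moment_op A C r (transpose S)"
  unfolding moment_op_def
  by (simp add: transpose_add transpose_sum matrix_transpose_mul matrix_mul_assoc add_ac)

lemma transpose_lyap_op: "transpose (lyap_op A C r S) = lyap_op A C r (transpose S)"
  unfolding lyap_op_def
  by (simp add: transpose_add transpose_sum matrix_transpose_mul matrix_mul_assoc add_ac)

lemma linear_moment_op: "linear (moment_op A C r)"
  unfolding moment_op_def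
  by (rule linearI)
    (simp_all add: matrix_add_ldistrib matrix_add_rdistrib sum.distrib matrix_scaleR_left
       matrix_scaleR_right scaleR_sum_right algebra_simps)

lemma linear_lyap_op: "linear (lyap_op A C r)"
  unfolding lyap_op_def
  by (rule linearI)
    (simp_all add: matrix_add_ldistrib matrix_add_rdistrib sum.distrib matrix_scaleR_left
       matrix_scaleR_right scaleR_sum_right algebra_simps)

lemma quadratic_form_lyap_op:
  "s \<bullet> (lyap_op A C r Y *v s) = s \<bullet> (Y *v (A *v s)) + (A *v s) \<bullet> (Y *v s)
     + (\<Sum>l=1..r. (C l *v s) \<bullet> (Y *v (C l *v s)))"
  unfolding lyap_op_def
  by (simp add: matrix_vector_mult_add_rdistrib matrix_vector_mult_sum_left inner_add_right
      inner_sum_right inner_matrix_vector_transpose flip: matrix_vector_mul_assoc)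

definition moment_solution :: "real^'n^'n \<Rightarrow> (nat \<Rightarrow> real^'n^'n) \<Rightarrow> nat \<Rightarrow> (real \<Rightarrow> real^'n^'n) \<Rightarrow> bool" where
  "moment_solution A C r S \<longleftrightarrow>
     (\<forall>t\<ge>0. (S has_vector_derivative moment_op A C r (S t)) (at t within {0..}))"

lemma ms_stable_iff_moment_solution:
  "ms_stable A C r \<longleftrightarrow>
     (\<forall>x S. S 0 = outer x x \<and> moment_solution A C r S \<longrightarrow> ((\<lambda>t. trace (S t)) \<longlongrightarrow> 0) at_top)"
  unfolding ms_stable_def moment_solution_def outer_def by blast

lemma moment_solution_exists: "\<exists>S. S 0 = X \<and> moment_solution A C r S"
  using linear_ode_exists[OF linear_conv_bounded_linear[THEN iffD1, OF linear_moment_op], of X A C r "{0..}"]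
  unfolding moment_solution_def by blast

lemma moment_solution_transpose:
  "moment_solution A C r S \<Longrightarrow> moment_solution A C r (\<lambda>t. transpose (S t))"
proof -
  have "bounded_linear (transpose :: real^'n^'n \<Rightarrow> real^'n^'n)"
    by (simp add: linear_conv_bounded_linear[symmetric] linearI transpose_add transpose_scalar)
  from bounded_linear.has_vector_derivative[OF this]
  show "moment_solution A C r S \<Longrightarrow> moment_solution A C r (\<lambda>t. transpose (S t))"
    unfolding moment_solution_def by (metis transpose_moment_op)
qed

lemma moment_solution_add:
  "moment_solution A C r S \<Longrightarrow> moment_solution A C r T \<Longrightarrow> moment_solution A C r (\<lambda>t. S t + T t)"
  unfolding moment_solution_def
  by (simp add: has_vector_derivative_add linear_add[OF linear_moment_op])

lemma moment_solution_scaleR: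
  "moment_solution A C r S \<Longrightarrow> moment_solution A C r (\<lambda>t. c *\<^sub>R S t)"
  unfolding moment_solution_def
  using bounded_linear.has_vector_derivative[OF bounded_linear_scaleR_right, of S _ _ c]
  by (simp add: linear_scale[OF linear_moment_op])

lemma moment_solution_zero: "moment_solution A C r (\<lambda>t. 0)"
  unfolding moment_solution_def by (simp add: linear_0[OF linear_moment_op])

lemma continuous_on_moment_solution:
  "moment_solution A C r S \<Longrightarrow> continuous_on {0..} S"
  unfolding moment_solution_def
  by (auto simp: continuous_on_eq_continuous_within intro: has_vector_derivative_continuous)

lemma has_real_derivative_inner_moment_solution:
  assumes "moment_solution A C r S" "t \<ge> 0"
  shows "((\<lambda>t. S t \<bullet> Y) has_real_derivative (S t \<bullet> lyap_op A C r Y)) (at t within {0..})"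
proof -
  have "(S has_vector_derivative moment_op A C r (S t)) (at t within {0..})"
    using assms unfolding moment_solution_def by auto
  from bounded_linear.has_vector_derivative[OF bounded_linear_inner_left this]
  show ?thesis
    by (simp add: has_real_derivative_iff_has_vector_derivative inner_moment_op)
qed

lemma deriv_nonpos_imp_antimono_nonneg:
  fixes f f' :: "real \<Rightarrow> real"
  assumes "\<And>t. t \<ge> 0 \<Longrightarrow> (f has_real_derivative f' t) (at t within {0..})"
    and "\<And>t. t \<ge> 0 \<Longrightarrow> f' t \<le> 0"
    and "0 \<le> s" "s \<le> t"
  shows "f t \<le> f s"
proof -
  have "\<exists>x\<in>{s..t}. f t - f s = (\<lambda>h. h * f' x) (t - s)"
  proof (rule mvt_very_simple[OF assms(4)])
    fix x assume "s \<le> x" "x \<le> t"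
    then have "(f has_real_derivative f' x) (at x within {s..t})"
      using assms(1)[of x] assms(3) by (auto intro: has_field_derivative_subset)
    then show "(f has_derivative (\<lambda>h. h * f' x)) (at x within {s..t})"
      by (simp add: has_field_derivative_def mult.commute[of _ "f' x"])
  qed
  then obtain x where "x \<in> {s..t}" "f t - f s = (t - s) * f' x" by auto
  moreover have "f' x \<le> 0" using assms(2,3) \<open>x \<in> {s..t}\<close> by auto
  ultimately show ?thesis using assms(4) by (smt (verit) mult_nonneg_nonpos)
qed

lemma deriv_le_imp_exp_decay:
  fixes f f' :: "real \<Rightarrow> real"
  assumes "\<And>t. t \<ge> 0 \<Longrightarrow> (f has_real_derivative f' t) (at t within {0..})"
    and "\<And>t. t \<ge> 0 \<Longrightarrow> f' t \<le> - k * f t"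
    and "0 \<le> t"
  shows "f t \<le> f 0 * exp (- k * t)"
proof -
  define g where "g t = exp (k * t) * f t" for t
  have "g t \<le> g 0"
  proof (rule deriv_nonpos_imp_antimono_nonneg[of g "\<lambda>t. exp (k * t) * (k * f t + f' t)"])
    fix t :: real assume "t \<ge> 0"
    have "((\<lambda>t. exp (k * t)) has_real_derivative exp (k * t) * k) (at t within {0..})"
      by (auto intro!: derivative_eq_intros)
    from DERIV_mult[OF this assms(1)[OF \<open>t \<ge> 0\<close>]]
    show "(g has_real_derivative exp (k * t) * (k * f t + f' t)) (at t within {0..})"
      unfolding g_def by (simp add: algebra_simps)
    show "exp (k * t) * (k * f t + f' t) \<le> 0"
      using assms(2)[OF \<open>t \<ge> 0\<close>] by (intro mult_nonneg_nonpos) auto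
  qed (use assms in auto)
  then have "exp (- k * t) * (exp (k * t) * f t) \<le> exp (- k * t) * f 0"
    by (simp add: g_def mult_left_mono)
  then show ?thesis by (simp add: exp_minus mult.commute field_simps)
qed

section \<open>Positivity of the moment flow\<close>

text \<open>\<open>cplx_form X W a b\<close> is the real part of \<open>z\<^sup>* (X - i W) z\<close> for \<open>z = a + i b\<close>, i.e. the
  Hermitian form of the complex matrix \<open>X - i W\<close>; \<open>cplx_polar\<close> is its polarization.\<close>

definition cplx_form :: "real^'n^'n \<Rightarrow> real^'n^'n \<Rightarrow> real^'n \<Rightarrow> real^'n \<Rightarrow> real" where
  "cplx_form X W a b = a \<bullet> (X *v a) + b \<bullet> (X *v b) + a \<bullet> (W *v b) - b \<bullet> (W *v a)"

definition cplx_polar ::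
  "real^'n^'n \<Rightarrow> real^'n^'n \<Rightarrow> real^'n \<Rightarrow> real^'n \<Rightarrow> real^'n \<Rightarrow> real^'n \<Rightarrow> real" where
  "cplx_polar Y V a b a' b' = a \<bullet> (Y *v a') + a' \<bullet> (Y *v a) + b \<bullet> (Y *v b') + b' \<bullet> (Y *v b)
     + a \<bullet> (V *v b') + a' \<bullet> (V *v b) - b \<bullet> (V *v a') - b' \<bullet> (V *v a)"

lemma cplx_form_eq_inner:
  "cplx_form X W a b = X \<bullet> (outer a a + outer b b) + W \<bullet> (outer a b - outer b a)"
  by (simp add: cplx_form_def inner_add_right inner_diff_right inner_outer)

lemma cplx_form_add: "cplx_form (X1 + X2) (W1 + W2) a b = cplx_form X1 W1 a b + cplx_form X2 W2 a b"
  by (simp add: cplx_form_def matrix_vector_mult_add_rdistrib inner_add_right algebra_simps)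

lemma cplx_form_add_scaleR:
  "cplx_form (X1 + c *\<^sub>R X2) W a b = cplx_form X1 W a b + c * cplx_form X2 0 a b"
  by (simp add: cplx_form_def matrix_vector_mult_add_rdistrib inner_add_right
      matrix_vector_mult_scaleR_left algebra_simps)

lemma cplx_form_sum: "cplx_form (sum f I) (sum g I) a b = (\<Sum>l\<in>I. cplx_form (f l) (g l) a b)"
  by (induction I rule: infinite_finite_induct) (simp_all add: cplx_form_add cplx_form_def[of 0 0])

lemma cplx_form_mat_1: "cplx_form (mat 1) 0 a b = a \<bullet> a + b \<bullet> b"
  by (simp add: cplx_form_def)

lemma cplx_form_zero_vec: "cplx_form X W 0 0 = 0"
  by (simp add: cplx_form_def)

lemma cplx_form_real: "cplx_form X W a 0 = a \<bullet> (X *v a)"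
  by (simp add: cplx_form_def)

lemma cplx_form_scaleR_vec: "cplx_form X W (c *\<^sub>R a) (c *\<^sub>R b) = c^2 * cplx_form X W a b"
  by (simp add: cplx_form_def matrix_vector_mult_scaleR power2_eq_square algebra_simps)

lemma cplx_form_expand:
  "cplx_form Y V (a + s *\<^sub>R a') (b + s *\<^sub>R b')
     = cplx_form Y V a b + s * cplx_polar Y V a b a' b' + s^2 * cplx_form Y V a' b'"
  by (simp add: cplx_form_def cplx_polar_def matrix_vector_right_distrib inner_add_left
      inner_add_right matrix_vector_mult_scaleR power2_eq_square algebra_simps)

lemma cplx_form_moment_op:
  "cplx_form (moment_op A C r Y) (moment_op A C r V) a b
     = cplx_polar Y V a b (transpose A *v a) (transpose A *v b)
       + (\<Sum>l=1..r. cplx_form Y V (transpose (C l) *v a) (transpose (C l) *v b))"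
proof -
  have conj: "x \<bullet> ((M ** Z ** transpose M) *v y) = (transpose M *v x) \<bullet> (Z *v (transpose M *v y))"
    for x y and M Z :: "real^'n^'n"
    by (simp add: inner_matrix_vector_transpose flip: matrix_vector_mul_assoc)
  have "cplx_form (A ** Y + Y ** transpose A) (A ** V + V ** transpose A) a b
      = cplx_polar Y V a b (transpose A *v a) (transpose A *v b)"
    by (simp add: cplx_form_def cplx_polar_def matrix_vector_mult_add_rdistrib inner_add_right
        inner_matrix_vector_transpose algebra_simps flip: matrix_vector_mul_assoc)
  moreover have "cplx_form (C l ** Y ** transpose (C l)) (C l ** V ** transpose (C l)) a b
      = cplx_form Y V (transpose (C l) *v a) (transpose (C l) *v b)" for l
    by (simp add: cplx_form_def conj)
  ultimately show ?thesis
    unfolding moment_op_def by (simp add: cplx_form_add cplx_form_sum)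
qed

text \<open>The tangency condition for the cone of nonnegative forms: at a point where the form
  vanishes, the moment vector field does not point outwards.\<close>

lemma cplx_form_moment_op_nonneg:
  assumes nonneg: "\<And>a b. 0 \<le> cplx_form Y V a b" and zero: "cplx_form Y V a b = 0"
  shows "0 \<le> cplx_form (moment_op A C r Y) (moment_op A C r V) a b"
proof -
  let ?a' = "transpose A *v a" and ?b' = "transpose A *v b"
  have "(cplx_polar Y V a b ?a' ?b' / 2)^2 \<le> cplx_form Y V a b * cplx_form Y V ?a' ?b'"
  proof (rule quadratic_nonneg_imp_discriminant_le)
    show "0 \<le> cplx_form Y V a b + 2 * s * (cplx_polar Y V a b ?a' ?b' / 2) + s^2 * cplx_form Y V ?a' ?b'"
      for s
      using nonneg[of "a + s *\<^sub>R ?a'" "b + s *\<^sub>R ?b'"] by (simp add: cplx_form_expand)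
  qed (rule nonneg)
  then have "cplx_polar Y V a b ?a' ?b' = 0" using zero by simp
  then show ?thesis
    by (simp add: cplx_form_moment_op sum_nonneg nonneg)
qed

lemma has_real_derivative_cplx_form_moment_solution:
  assumes X: "moment_solution A C r X" and W: "moment_solution A C r W" and "0 \<le> t"
  shows "((\<lambda>t. cplx_form (X t) (W t) a b) has_real_derivative
           cplx_form (moment_op A C r (X t)) (moment_op A C r (W t)) a b) (at t within {0..})"
proof -
  have "(X has_vector_derivative moment_op A C r (X t)) (at t within {0..})"
    "(W has_vector_derivative moment_op A C r (W t)) (at t within {0..})"
    using X W \<open>0 \<le> t\<close> unfolding moment_solution_def by auto
  then have "((\<lambda>t. X t \<bullet> (outer a a + outer b b) + W t \<bullet> (outer a b - outer b a)) has_vector_derivative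
      moment_op A C r (X t) \<bullet> (outer a a + outer b b) + moment_op A C r (W t) \<bullet> (outer a b - outer b a))
      (at t within {0..})"
    by (intro has_vector_derivative_add bounded_linear.has_vector_derivative[OF bounded_linear_inner_left])
  then show ?thesis
    by (simp add: cplx_form_eq_inner has_real_derivative_iff_has_vector_derivative)
qed

lemma first_nonpos_time:
  fixes h :: "real \<times> 'a::metric_space \<Rightarrow> real"
  assumes "compact K" and cont: "continuous_on ({0..T} \<times> K) h"
    and init: "\<And>z. z \<in> K \<Longrightarrow> 0 < h (0, z)"
    and "z1 \<in> K" "0 \<le> T" "h (T, z1) \<le> 0"
  obtains ts zs where "0 < ts" "zs \<in> K" "h (ts, zs) = 0" "\<And>z. z \<in> K \<Longrightarrow> 0 \<le> h (ts, z)"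
    "\<And>t z. 0 \<le> t \<Longrightarrow> t < ts \<Longrightarrow> z \<in> K \<Longrightarrow> 0 < h (t, z)"
proof -
  define B where "B = ({0..T} \<times> K) \<inter> h -` {..0}"
  have "compact ({0..T} \<times> K)" using \<open>compact K\<close> by (intro compact_Times) auto
  moreover have "closed B"
    unfolding B_def using cont \<open>compact ({0..T} \<times> K)\<close>
    by (intro continuous_closed_preimage) (auto intro: compact_imp_closed)
  ultimately have "compact (fst ` B)"
    by (intro compact_continuous_image continuous_intros)
      (metis B_def Int_lower1 compact_Int_closed inf.absorb_iff2)
  moreover have "(T, z1) \<in> B" using assms by (simp add: B_def)
  ultimately obtain ts where "ts \<in> fst ` B" and least: "\<And>t. t \<in> fst ` B \<Longrightarrow> ts \<le> t"
    using compact_attains_inf by (metis empty_iff image_eqI fst_conv)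
  then obtain zs where "(ts, zs) \<in> B" by force
  then have ts: "0 \<le> ts" "ts \<le> T" and "zs \<in> K" and hzs: "h (ts, zs) \<le> 0"
    by (auto simp: B_def)
  have before: "0 < h (t, z)" if "0 \<le> t" "t < ts" "z \<in> K" for t z
  proof (rule ccontr)
    assume "\<not> 0 < h (t, z)"
    then have "t \<in> fst ` B" using that ts by (force simp: B_def)
    then show False using least[of t] \<open>t < ts\<close> by simp
  qed
  have "0 < ts" using init[OF \<open>zs \<in> K\<close>] hzs ts by (cases "ts = 0") auto
  have at_ts: "0 \<le> h (ts, z)" if "z \<in> K" for z
  proof (rule ccontr)
    assume neg: "\<not> 0 \<le> h (ts, z)"
    have "continuous_on {0..T} (\<lambda>t. h (t, z))"
      by (rule continuous_on_compose2[OF cont]) (use that in \<open>auto intro!: continuous_intros\<close>)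
    then obtain d where "d > 0"
      and d: "\<And>t. t \<in> {0..T} \<Longrightarrow> dist t ts < d \<Longrightarrow> dist (h (t, z)) (h (ts, z)) < - h (ts, z)"
      unfolding continuous_on_iff using neg ts by (metis atLeastAtMost_iff neg_0_less_iff_less not_le)
    define t' where "t' = max 0 (ts - d/2)"
    have "t' \<in> {0..T}" "dist t' ts < d" "t' < ts"
      using \<open>d > 0\<close> \<open>0 < ts\<close> ts by (auto simp: t'_def dist_real_def)
    then have "h (t', z) < 0" using d by (fastforce simp: dist_real_def abs_if split: if_splits)
    moreover have "0 < h (t', z)" using before[OF _ \<open>t' < ts\<close> that] by (simp add: t'_def)
    ultimately show False by simp
  qed
  show ?thesis
    using that[OF \<open>0 < ts\<close> \<open>zs \<in> K\<close> _ at_ts before] hzs at_ts[OF \<open>zs \<in> K\<close>] by simp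
qed

lemma continuous_on_outer [continuous_intros]:
  "continuous_on S f \<Longrightarrow> continuous_on S g \<Longrightarrow> continuous_on S (\<lambda>x. outer (f x) (g x))"
  unfolding outer_def by (intro continuous_intros)

lemma norm_Pair_sq: "(norm (a, b))^2 = a \<bullet> a + b \<bullet> b"
  by (simp add: norm_prod_def power2_norm_eq_inner)

lemma deriv_nonpos_at_first_zero:
  fixes g :: "real \<Rightarrow> real"
  assumes deriv: "(g has_real_derivative g') (at ts within {0..})" and "0 < ts" and "g ts = 0"
    and before: "\<And>s. 0 \<le> s \<Longrightarrow> s < ts \<Longrightarrow> 0 < g s"
  shows "g' \<le> 0"
proof (rule ccontr)
  assume "\<not> g' \<le> 0"
  then obtain d where "0 < d" and d: "\<And>s. 0 < s \<Longrightarrow> ts - s \<in> {0..} \<Longrightarrow> s < d \<Longrightarrow> g (ts - s) < g ts"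
    using has_real_derivative_pos_inc_left[OF deriv] by auto
  define s where "s = min (d/2) ts"
  have "0 < s" "ts - s \<in> {0..}" "s < d" using \<open>0 < d\<close> \<open>0 < ts\<close> by (auto simp: s_def)
  then show False using d[of s] \<open>g ts = 0\<close> before[of "ts - s"] by simp
qed

lemma cplx_form_moment_op_shift_pos:
  fixes X W :: "real^'n^'n"
  assumes nonneg: "\<And>a b. 0 \<le> cplx_form (X + e *\<^sub>R mat 1) W a b"
    and zero: "cplx_form (X + e *\<^sub>R mat 1) W a b = 0" and unit: "a \<bullet> a + b \<bullet> b = 1" and "0 < e"
  shows "0 < cplx_form (moment_op A C r X) (moment_op A C r W) a b + e * (norm (moment_op A C r (mat 1)) + 1)"
proof -
  have "0 \<le> cplx_form (moment_op A C r (X + e *\<^sub>R mat 1)) (moment_op A C r W) a b"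
    by (rule cplx_form_moment_op_nonneg[OF nonneg zero])
  also have "\<dots> = cplx_form (moment_op A C r X) (moment_op A C r W) a b
      + e * cplx_form (moment_op A C r (mat 1)) 0 a b"
    by (simp add: linear_add[OF linear_moment_op] linear_scale[OF linear_moment_op] cplx_form_add_scaleR)
  also have "cplx_form (moment_op A C r (mat 1)) 0 a b \<le> norm (moment_op A C r (mat 1))"
  proof -
    have "cplx_form (moment_op A C r (mat 1)) 0 a b \<le> norm (moment_op A C r (mat 1)) * (a \<bullet> a + b \<bullet> b)"
      using abs_quadratic_form_le[of a "moment_op A C r (mat 1)"]
        abs_quadratic_form_le[of b "moment_op A C r (mat 1)"]
      by (simp add: cplx_form_def distrib_left abs_le_iff)
    then show ?thesis using unit by simp
  qed
  finally show ?thesis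
    using \<open>0 < e\<close> by (simp add: distrib_left mult_left_mono)
qed

text \<open>The form is perturbed by the growing multiple \<open>\<epsilon> e\<^sup>\<beta>\<^sup>t I\<close> of the identity; \<open>\<beta>\<close>
  dominates the rate at which the moment flow can decrease the identity's form, which makes
  the derivative at a first zero strictly positive.\<close>

lemma cplx_form_moment_solution_pos:
  fixes X W :: "real \<Rightarrow> real^'n^'n"
  assumes X: "moment_solution A C r X" and W: "moment_solution A C r W"
    and init: "\<And>a b. 0 \<le> cplx_form (X 0) (W 0) a b" and "0 < \<epsilon>" and "0 \<le> t" and "(a, b) \<noteq> 0"
  defines "\<beta> \<equiv> norm (moment_op A C r (mat 1)) + 1"
  shows "0 < cplx_form (X t) (W t) a b + \<epsilon> * exp (\<beta> * t) * (a \<bullet> a + b \<bullet> b)"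
proof (rule ccontr)
  assume neg: "\<not> ?thesis"
  define h where "h p = cplx_form (X (fst p)) (W (fst p)) (fst (snd p)) (snd (snd p))
    + \<epsilon> * exp (\<beta> * fst p) * (norm (snd p))^2" for p :: "real \<times> (real^'n) \<times> (real^'n)"
  have h_Pair: "h (s, (a, b)) = cplx_form (X s + (\<epsilon> * exp (\<beta> * s)) *\<^sub>R mat 1) (W s) a b" for s a b
    by (simp add: h_def norm_Pair_sq cplx_form_add_scaleR cplx_form_mat_1)
  have h_scale: "h (s, c *\<^sub>R z) = c^2 * h (s, z)" for s c z
    by (cases z) (simp add: h_Pair cplx_form_scaleR_vec)
  define K where "K = sphere (0 :: (real^'n) \<times> (real^'n)) 1"
  define z1 where "z1 = (a, b) /\<^sub>R norm (a, b)"
  have "z1 \<in> K" using \<open>(a, b) \<noteq> 0\<close> by (simp add: K_def z1_def del: scaleR_Pair)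
  moreover have "h (t, z1) \<le> 0"
    using neg h_scale[of t "inverse (norm (a, b))" "(a, b)"]
    by (simp add: z1_def h_def norm_Pair_sq mult_nonneg_nonpos)
  moreover have "continuous_on ({0..t} \<times> K) h"
  proof -
    have "continuous_on ({0..t} \<times> K) (\<lambda>p. X (fst p))" "continuous_on ({0..t} \<times> K) (\<lambda>p. W (fst p))"
      by (auto intro!: continuous_on_compose2[OF continuous_on_moment_solution] X W continuous_intros)
    then show ?thesis
      unfolding h_def[abs_def] cplx_form_eq_inner by (intro continuous_intros)
  qed
  moreover have "0 < h (0, z)" if "z \<in> K" for z
    using that init[of "fst z" "snd z"] \<open>0 < \<epsilon>\<close> by (simp add: h_def K_def add_nonneg_pos)
  moreover have "compact K" by (simp add: K_def)
  ultimately obtain ts zs where "0 < ts" "zs \<in> K" and zero: "h (ts, zs) = 0"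
    and at_ts: "\<And>z. z \<in> K \<Longrightarrow> 0 \<le> h (ts, z)"
    and before: "\<And>s z. 0 \<le> s \<Longrightarrow> s < ts \<Longrightarrow> z \<in> K \<Longrightarrow> 0 < h (s, z)"
    using first_nonpos_time[of K t h z1] \<open>0 \<le> t\<close> by blast
  obtain as bs where zs: "zs = (as, bs)" by fastforce
  define e where "e = \<epsilon> * exp (\<beta> * ts)"
  have nonneg: "0 \<le> cplx_form (X ts + e *\<^sub>R mat 1) (W ts) a b" for a b
  proof (cases "(a, b) = 0")
    case False
    have "h (ts, (a, b)) = (norm (a, b))^2 * h (ts, (a, b) /\<^sub>R norm (a, b))"
      using h_scale[of ts "norm (a, b)" "(a, b) /\<^sub>R norm (a, b)"] False by (simp del: scaleR_Pair)
    also have "0 \<le> \<dots>"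
      using False by (intro mult_nonneg_nonneg at_ts) (simp_all add: K_def del: scaleR_Pair)
    finally show ?thesis by (simp add: h_Pair e_def)
  qed (simp add: cplx_form_zero_vec zero_prod_def)
  have "0 < cplx_form (moment_op A C r (X ts)) (moment_op A C r (W ts)) as bs + e * \<beta>"
    unfolding \<beta>_def
  proof (rule cplx_form_moment_op_shift_pos[OF nonneg])
    show "cplx_form (X ts + e *\<^sub>R mat 1) (W ts) as bs = 0" using zero by (simp add: zs h_Pair e_def)
    show "as \<bullet> as + bs \<bullet> bs = 1" using \<open>zs \<in> K\<close> norm_Pair_sq[of as bs] by (simp add: K_def zs)
    show "0 < e" using \<open>0 < \<epsilon>\<close> by (simp add: e_def)
  qed
  moreover have "((\<lambda>s. h (s, zs)) has_real_derivative
      cplx_form (moment_op A C r (X ts)) (moment_op A C r (W ts)) as bs + e * \<beta>) (at ts within {0..})"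
  proof -
    have "((\<lambda>s. cplx_form (X s) (W s) as bs) has_real_derivative
        cplx_form (moment_op A C r (X ts)) (moment_op A C r (W ts)) as bs) (at ts within {0..})"
      using \<open>0 < ts\<close> by (intro has_real_derivative_cplx_form_moment_solution[OF X W]) simp
    moreover have "((\<lambda>s. \<epsilon> * exp (\<beta> * s) * (norm zs)^2) has_real_derivative e * \<beta>) (at ts within {0..})"
      using \<open>zs \<in> K\<close> by (auto intro!: derivative_eq_intros simp: K_def e_def)
    ultimately show ?thesis
      unfolding h_def fst_conv snd_conv zs by (rule DERIV_add)
  qed
  moreover have "0 \<le> s \<Longrightarrow> s < ts \<Longrightarrow> 0 < h (s, zs)" for s
    using before \<open>zs \<in> K\<close> by blast
  ultimately show False
    using deriv_nonpos_at_first_zero[of "\<lambda>s. h (s, zs)"] \<open>0 < ts\<close> zero by fastforce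
qed

lemma cplx_form_moment_solution_nonneg:
  fixes X W :: "real \<Rightarrow> real^'n^'n"
  assumes X: "moment_solution A C r X" and W: "moment_solution A C r W"
    and init: "\<And>a b. 0 \<le> cplx_form (X 0) (W 0) a b" and "0 \<le> t"
  shows "0 \<le> cplx_form (X t) (W t) a b"
proof (cases "(a, b) = 0")
  case False
  define \<beta> where "\<beta> = norm (moment_op A C r (mat 1)) + 1"
  define c where "c = exp (\<beta> * t) * (a \<bullet> a + b \<bullet> b)"
  have "0 < c" using False by (simp add: c_def norm_Pair_sq[symmetric])
  have pos: "0 < cplx_form (X t) (W t) a b + \<epsilon> * c" if "0 < \<epsilon>" for \<epsilon>
    using cplx_form_moment_solution_pos[OF X W init that \<open>0 \<le> t\<close> False] by (simp add: c_def \<beta>_def mult.assoc)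
  show ?thesis
  proof (rule ccontr)
    assume neg: "\<not> 0 \<le> cplx_form (X t) (W t) a b"
    then have "0 < - cplx_form (X t) (W t) a b / (2 * c)" using \<open>0 < c\<close> by (intro divide_pos_pos) auto
    from pos[OF this] show False using \<open>0 < c\<close> neg by (simp add: field_simps)
  qed
qed (simp add: cplx_form_zero_vec zero_prod_def)

lemma moment_solution_outer_psd:
  assumes "moment_solution A C r S" and "S 0 = outer x x" and "transpose (S t) = S t" and "0 \<le> t"
  shows "psd_mat (S t)"
proof -
  have "0 \<le> cplx_form (S t) 0 a 0" for a
  proof (rule cplx_form_moment_solution_nonneg[OF assms(1) moment_solution_zero _ \<open>0 \<le> t\<close>])
    show "0 \<le> cplx_form (S 0) 0 a b" for a b
      by (simp add: assms(2) cplx_form_def inner_outer_matrix_vector_mult)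
  qed
  then show ?thesis using assms(3) by (simp add: psd_mat_def sym_mat_def cplx_form_real)
qed

lemma moment_solution_sym_part:
  assumes "moment_solution A C r S" and "S 0 = outer x x"
    and S'_def: "S' = (\<lambda>t. (1/2) *\<^sub>R (S t + transpose (S t)))"
  shows "moment_solution A C r S'" "S' 0 = outer x x" "\<And>t. 0 \<le> t \<Longrightarrow> psd_mat (S' t)"
    "\<And>t. trace (S' t) = trace (S t)"
proof -
  show sol: "moment_solution A C r S'"
    unfolding S'_def by (intro moment_solution_scaleR moment_solution_add moment_solution_transpose assms)
  show init: "S' 0 = outer x x" by (simp add: S'_def assms(2) transpose_outer scaleR_2[symmetric])
  show "psd_mat (S' t)" if "0 \<le> t" for t
    using moment_solution_outer_psd[OF sol init _ that]
    by (simp add: S'_def transpose_scalar transpose_add add.commute)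
  show "trace (S' t) = trace (S t)" for t
    by (simp add: S'_def trace_def transpose_def sum.distrib sum_distrib_left[symmetric])
qed

section \<open>Lyapunov equations of mean-square stable systems\<close>

lemma ms_stable_psd_moment_solution:
  assumes "ms_stable A C r"
  obtains S where "moment_solution A C r S" "S 0 = outer x x" "\<And>t. 0 \<le> t \<Longrightarrow> psd_mat (S t)"
    "((\<lambda>t. trace (S t)) \<longlongrightarrow> 0) at_top"
proof -
  obtain S0 where S0: "S0 0 = outer x x" "moment_solution A C r S0" using moment_solution_exists by blast
  note S = moment_solution_sym_part[OF S0(2,1) refl]
  have "((\<lambda>t. trace (S0 t)) \<longlongrightarrow> 0) at_top"
    using assms S0 unfolding ms_stable_iff_moment_solution by blast
  then show ?thesis using that[OF S(1-3)] S(4) by simp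
qed

lemma tendsto_inner_psd_mat_0:
  fixes S :: "real \<Rightarrow> real^'n^'n"
  assumes "\<And>t. 0 \<le> t \<Longrightarrow> psd_mat (S t)" and "((\<lambda>t. trace (S t)) \<longlongrightarrow> 0) at_top"
  shows "((\<lambda>t. S t \<bullet> Y) \<longlongrightarrow> 0) at_top"
proof (rule Lim_null_comparison)
  show "\<forall>\<^sub>F t in at_top. norm (S t \<bullet> Y) \<le> norm Y * trace (S t)"
    using eventually_ge_at_top[of "0::real"] by eventually_elim (simp add: abs_inner_psd_mat_le assms(1))
  show "((\<lambda>t. norm Y * trace (S t)) \<longlongrightarrow> 0) at_top"
    using tendsto_mult_right_zero[OF assms(2)] by simp
qed

text \<open>\<open>t \<mapsto> \<langle>S(t), Y\<rangle>\<close> has derivative \<open>-\<langle>S(t), Q\<rangle> \<le> 0\<close> and tends to \<open>0\<close>, so it starts nonnegative.\<close>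

lemma lyap_op_solution_psd:
  assumes stable: "ms_stable A C r" and sym: "transpose Y = Y" and "psd_mat Q"
    and eq: "lyap_op A C r Y + Q = 0"
  shows "psd_mat Y"
proof -
  have "0 \<le> x \<bullet> (Y *v x)" for x
  proof -
    obtain S where S: "moment_solution A C r S" "S 0 = outer x x" "\<And>t. 0 \<le> t \<Longrightarrow> psd_mat (S t)"
      "((\<lambda>t. trace (S t)) \<longlongrightarrow> 0) at_top"
      by (rule ms_stable_psd_moment_solution[OF stable, where x = x]) blast
    have mono: "S t \<bullet> Y \<le> S 0 \<bullet> Y" if "0 \<le> t" for t
    proof (rule deriv_nonpos_imp_antimono_nonneg[of "\<lambda>t. S t \<bullet> Y" "\<lambda>t. S t \<bullet> lyap_op A C r Y"])
      show "((\<lambda>t. S t \<bullet> Y) has_real_derivative S t \<bullet> lyap_op A C r Y) (at t within {0..})" if "0 \<le> t" for t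
        by (rule has_real_derivative_inner_moment_solution[OF S(1) that])
      show "S t \<bullet> lyap_op A C r Y \<le> 0" if "0 \<le> t" for t
        using psd_mat_inner_nonneg[OF S(3)[OF that] \<open>psd_mat Q\<close>] eq
        by (simp add: eq_neg_iff_add_eq_0[symmetric])
    qed (use that in auto)
    have "0 \<le> S 0 \<bullet> Y"
      by (rule tendsto_upperbound[OF tendsto_inner_psd_mat_0[OF S(3,4)]
          eventually_mono[OF eventually_ge_at_top mono] trivial_limit_at_top_linorder])
    then show ?thesis by (simp add: S(2) inner_commute[of "outer x x"] inner_outer)
  qed
  then show ?thesis using sym by (simp add: psd_mat_def sym_mat_def)
qed

lemma cplx_form_rank_one:
  "cplx_form (outer u u + outer v v) (outer u v - outer v u) a b = (u \<bullet> a + v \<bullet> b)^2 + (v \<bullet> a - u \<bullet> b)^2"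
  by (simp add: cplx_form_def matrix_vector_mult_add_rdistrib matrix_vector_mult_diff_rdistrib
      inner_add_right inner_diff_right inner_outer_matrix_vector_mult power2_eq_square algebra_simps)

lemma cplx_form_nonneg_imp_entry_bounds:
  fixes X V :: "real^'n^'n"
  assumes nonneg: "\<And>a b. 0 \<le> cplx_form X V a b"
  shows "0 \<le> X$i$i" and "\<bar>V$i$j - V$j$i\<bar> \<le> X$i$i + X$j$j"
proof -
  show "0 \<le> X$i$i" using nonneg[of "axis i 1" 0] by (simp add: cplx_form_real inner_matrix_axis)
  show "\<bar>V$i$j - V$j$i\<bar> \<le> X$i$i + X$j$j"
    using nonneg[of "axis i 1" "axis j 1"] nonneg[of "axis i 1" "- axis j 1"]
    by (simp add: cplx_form_def inner_matrix_axis matrix_vector_mult_neg_right)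
qed

lemma abs_inner_skew_le:
  fixes X V W :: "real^'n^'n"
  assumes nonneg: "\<And>a b. 0 \<le> cplx_form X V a b" and skew: "transpose W = - W"
  shows "\<bar>V \<bullet> W\<bar> \<le> (\<Sum>i\<in>UNIV. \<Sum>j\<in>UNIV. \<bar>W$i$j\<bar>) * trace X"
proof -
  have W_swap: "W$j$i = - W$i$j" for i j
    using arg_cong[OF skew, of "\<lambda>M. M$i$j"] by (simp add: transpose_def)
  have "(\<Sum>i\<in>UNIV. \<Sum>j\<in>UNIV. V$j$i * W$i$j) = (\<Sum>i\<in>UNIV. \<Sum>j\<in>UNIV. - (V$i$j * W$i$j))"
    by (subst sum.swap) (intro sum.cong refl, metis W_swap mult_minus_right)
  then have "(\<Sum>i\<in>UNIV. \<Sum>j\<in>UNIV. V$j$i * W$i$j) = - (V \<bullet> W)"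
    by (simp add: inner_matrix_eq sum_negf)
  then have "2 * (V \<bullet> W) = (\<Sum>i\<in>UNIV. \<Sum>j\<in>UNIV. (V$i$j - V$j$i) * W$i$j)"
    by (simp add: inner_matrix_eq left_diff_distrib sum_subtractf)
  also have "\<bar>\<dots>\<bar> \<le> (\<Sum>i\<in>UNIV. \<Sum>j\<in>UNIV. \<bar>(V$i$j - V$j$i) * W$i$j\<bar>)"
    by (rule order_trans[OF sum_abs sum_mono[OF sum_abs]])
  also have "\<dots> \<le> (\<Sum>i\<in>UNIV. \<Sum>j\<in>UNIV. (2 * trace X) * \<bar>W$i$j\<bar>)"
  proof (intro sum_mono)
    fix i j
    have "X$k$k \<le> trace X" for k
      unfolding trace_def
      by (rule member_le_sum) (auto intro: cplx_form_nonneg_imp_entry_bounds(1)[OF nonneg])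
    then have "\<bar>V$i$j - V$j$i\<bar> \<le> 2 * trace X"
      using cplx_form_nonneg_imp_entry_bounds(2)[OF nonneg, of i j] by (smt (verit))
    then show "\<bar>(V$i$j - V$j$i) * W$i$j\<bar> \<le> (2 * trace X) * \<bar>W$i$j\<bar>"
      by (simp add: abs_mult mult_right_mono)
  qed
  also have "\<dots> = 2 * ((\<Sum>i\<in>UNIV. \<Sum>j\<in>UNIV. \<bar>W$i$j\<bar>) * trace X)"
    by (simp add: sum_distrib_left sum_distrib_right mult_ac)
  finally show ?thesis by (simp add: abs_mult)
qed

text \<open>For skew \<open>W\<close>, pair the conserved quantity \<open>\<langle>V(t), W\<rangle>\<close> with the moment trajectory \<open>V\<close>
  starting at \<open>u v\<^sup>T - v u\<^sup>T\<close>; it is dominated by the decaying trace of the trajectory starting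
  at \<open>u u\<^sup>T + v v\<^sup>T\<close>, because together they form a positive Hermitian trajectory.\<close>

lemma lyap_op_skew_eq_0:
  assumes stable: "ms_stable A C r" and skew: "transpose W = - W" and eq: "lyap_op A C r W = 0"
  shows "W = 0"
proof -
  have "u \<bullet> (W *v v) = 0" for u v
  proof -
    obtain Su where Su: "moment_solution A C r Su" "Su 0 = outer u u"
      "\<And>t. 0 \<le> t \<Longrightarrow> psd_mat (Su t)" "((\<lambda>t. trace (Su t)) \<longlongrightarrow> 0) at_top"
      by (rule ms_stable_psd_moment_solution[OF stable, where x = u]) blast
    obtain Sv where Sv: "moment_solution A C r Sv" "Sv 0 = outer v v"
      "\<And>t. 0 \<le> t \<Longrightarrow> psd_mat (Sv t)" "((\<lambda>t. trace (Sv t)) \<longlongrightarrow> 0) at_top"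
      by (rule ms_stable_psd_moment_solution[OF stable, where x = v]) blast
    obtain V where V: "V 0 = outer u v - outer v u" "moment_solution A C r V"
      using moment_solution_exists by blast
    define X where "X t = Su t + Sv t" for t
    have X: "moment_solution A C r X" unfolding X_def by (rule moment_solution_add[OF Su(1) Sv(1)])
    have nonneg: "0 \<le> cplx_form (X t) (V t) a b" if "0 \<le> t" for t a b
      by (rule cplx_form_moment_solution_nonneg[OF X V(2) _ that])
        (simp add: X_def Su(2) Sv(2) V(1) cplx_form_rank_one)
    have "\<exists>c. \<forall>t\<in>{0..}. V t \<bullet> W = c"
    proof (rule has_field_derivative_zero_constant)
      show "((\<lambda>t. V t \<bullet> W) has_field_derivative 0) (at t within {0..})" if "t \<in> {0..}" for t
        using has_real_derivative_inner_moment_solution[OF V(2), of t W] that by (simp add: eq)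
    qed (rule convex_real_interval)
    then obtain c where const: "\<And>t. t \<in> {0..} \<Longrightarrow> V t \<bullet> W = c" by blast
    have "((\<lambda>t. (\<Sum>i\<in>UNIV. \<Sum>j\<in>UNIV. \<bar>W$i$j\<bar>) * trace (X t)) \<longlongrightarrow> 0) at_top"
      using tendsto_mult_right_zero[OF tendsto_add_zero[OF Su(4) Sv(4)]] by (simp add: X_def trace_add)
    moreover have "\<forall>\<^sub>F t in at_top. norm (V t \<bullet> W) \<le> (\<Sum>i\<in>UNIV. \<Sum>j\<in>UNIV. \<bar>W$i$j\<bar>) * trace (X t)"
      by (rule eventually_mono[OF eventually_ge_at_top[of 0]])
        (simp add: abs_inner_skew_le[OF nonneg skew])
    ultimately have "((\<lambda>t. V t \<bullet> W) \<longlongrightarrow> 0) at_top" by (rule Lim_null_comparison[rotated])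
    moreover have "((\<lambda>t. V t \<bullet> W) \<longlongrightarrow> c) at_top"
      by (rule tendsto_eventually, rule eventually_mono[OF eventually_ge_at_top[of 0]]) (simp add: const)
    ultimately have "c = 0" using tendsto_unique[OF trivial_limit_at_top_linorder] by blast
    moreover have "v \<bullet> (W *v u) = - (u \<bullet> (W *v v))"
      using inner_matrix_vector_transpose[of W v u] skew
      by (simp add: matrix_vector_mult_neg_left inner_commute)
    ultimately show ?thesis
      using const[of 0] by (simp add: V(1) inner_diff_left inner_commute[of "outer _ _"] inner_outer)
  qed
  then have "W *v v = 0" for v
    using inner_eq_zero_iff by blast
  then show ?thesis by (simp add: matrix_eq)
qed

lemma lyap_op_eq_0:
  fixes Y :: "real^'n^'n"
  assumes stable: "ms_stable A C r" and eq: "lyap_op A C r Y = 0"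
  shows "Y = 0"
proof -
  have lin: "linear (lyap_op A C r)" by (rule linear_lyap_op)
  have eqT: "lyap_op A C r (transpose Y) = 0" using transpose_lyap_op[of A C r Y] eq by simp
  define Ys where "Ys = (1/2) *\<^sub>R (Y + transpose Y)"
  define Ya where "Ya = (1/2) *\<^sub>R (Y - transpose Y)"
  have "Y = Ys + Ya" by (simp add: Ys_def Ya_def vec_eq_iff transpose_def field_simps)
  moreover have "Ya = 0"
  proof (rule lyap_op_skew_eq_0[OF stable])
    show "transpose Ya = - Ya" by (simp add: Ya_def transpose_def vec_eq_iff field_simps)
    show "lyap_op A C r Ya = 0"
      unfolding Ya_def using eq eqT by (simp add: linear_scale[OF lin] linear_diff[OF lin])
  qed
  moreover have "Ys = 0"
  proof -
    have sym: "transpose Ys = Ys" "transpose (- Ys) = - Ys"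
      by (simp_all add: Ys_def transpose_scalar transpose_add add.commute transpose_def vec_eq_iff)
    have "lyap_op A C r Ys = 0"
      unfolding Ys_def using eq eqT by (simp add: linear_scale[OF lin] linear_add[OF lin])
    then have "psd_mat Ys" "psd_mat (- Ys)"
      using lyap_op_solution_psd[OF stable _ _, of _ 0] sym linear_neg[OF lin, of Ys]
      by (auto simp: psd_mat_def sym_mat_def)
    then have "x \<bullet> (Ys *v x) = 0" for x
      using psd_matD(2)[of Ys x] psd_matD(2)[of "- Ys" x] by (simp add: matrix_vector_mult_neg_left)
    then show ?thesis
      using psd_mat_quadratic_form_eq_0[OF \<open>psd_mat Ys\<close>] by (simp add: matrix_eq)
  qed
  ultimately show ?thesis by simp
qed

lemma inj_lyap_op: "ms_stable A C r \<Longrightarrow> inj (lyap_op A C r)"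
  by (rule injI) (metis lyap_op_eq_0 linear_diff[OF linear_lyap_op] eq_iff_diff_eq_0)

lemma lyap_op_surj: "ms_stable A C r \<Longrightarrow> \<exists>Y. lyap_op A C r Y = Q"
  using linear_injective_imp_surjective[OF linear_lyap_op inj_lyap_op] by (metis surjD)

lemma lyap_op_solution_psd_unique:
  fixes Y Q :: "real^'n^'n"
  assumes stable: "ms_stable A C r" and "psd_mat Q" and eq: "lyap_op A C r Y + Q = 0"
  shows "psd_mat Y" and "\<And>Y'. lyap_op A C r Y' + Q = 0 \<Longrightarrow> Y' = Y"
proof -
  show uniq: "Y' = Y" if "lyap_op A C r Y' + Q = 0" for Y'
    using injD[OF inj_lyap_op[OF stable]] eq that by (metis add_right_cancel)
  have "transpose (lyap_op A C r Y + Q) = 0" using eq by simp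
  then have "lyap_op A C r (transpose Y) + Q = 0"
    using psd_matD(1)[OF \<open>psd_mat Q\<close>] by (simp add: transpose_add transpose_lyap_op)
  then have "transpose Y = Y" by (rule uniq)
  then show "psd_mat Y" by (rule lyap_op_solution_psd[OF stable _ \<open>psd_mat Q\<close> eq])
qed

lemma ms_stable_if_lyap_function:
  fixes Y :: "real^'n^'n"
  assumes "0 < lam" and lower: "\<And>x. lam * (x \<bullet> x) \<le> x \<bullet> (Y *v x)"
    and "0 < \<mu>" and decrease: "\<And>x. x \<bullet> (lyap_op A C r Y *v x) \<le> - \<mu> * (x \<bullet> x)"
  shows "ms_stable A C r"
  unfolding ms_stable_iff_moment_solution
proof (intro allI impI, elim conjE)
  fix x and S :: "real \<Rightarrow> real^'n^'n"
  assume init: "S 0 = outer x x" and sol: "moment_solution A C r S"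
  define S' where "S' = (\<lambda>t. (1/2) *\<^sub>R (S t + transpose (S t)))"
  note S' = moment_solution_sym_part[OF sol init S'_def]
  define V where "V t = S' t \<bullet> Y" for t
  define \<kappa> where "\<kappa> = \<mu> / (norm Y + 1)"
  have "0 < \<kappa>" using \<open>0 < \<mu>\<close> by (simp add: \<kappa>_def add_nonneg_pos)
  have trace_le: "lam * trace (S' t) \<le> V t" if "0 \<le> t" for t
    unfolding V_def by (rule psd_mat_inner_ge[OF S'(3)[OF that] lower])
  have "V t \<le> V 0 * exp (- \<kappa> * t)" if "0 \<le> t" for t
  proof (rule deriv_le_imp_exp_decay[OF _ _ that])
    show "(V has_real_derivative S' t \<bullet> lyap_op A C r Y) (at t within {0..})" if "0 \<le> t" for t
      unfolding V_def by (rule has_real_derivative_inner_moment_solution[OF S'(1) that])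
    show "S' t \<bullet> lyap_op A C r Y \<le> - \<kappa> * V t" if "0 \<le> t" for t
    proof -
      have "\<mu> * (x \<bullet> x) \<le> x \<bullet> ((- lyap_op A C r Y) *v x)" for x
        using decrease[of x] by (simp add: matrix_vector_mult_neg_left)
      then have "\<mu> * trace (S' t) \<le> S' t \<bullet> (- lyap_op A C r Y)"
        by (rule psd_mat_inner_ge[OF S'(3)[OF that]])
      moreover have "\<kappa> * V t \<le> \<kappa> * ((norm Y + 1) * trace (S' t))"
        using abs_inner_psd_mat_le[OF S'(3)[OF that], of Y] trace_psd_mat_nonneg[OF S'(3)[OF that]]
          \<open>0 < \<kappa>\<close> by (intro mult_left_mono) (auto simp: V_def algebra_simps)
      moreover have "\<kappa> * ((norm Y + 1) * trace (S' t)) = \<mu> * trace (S' t)"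
        using add_nonneg_pos[OF norm_ge_zero[of Y] zero_less_one] by (simp add: \<kappa>_def)
      ultimately show ?thesis using inner_minus_right[of "S' t" "lyap_op A C r Y"] by linarith
    qed
  qed
  with trace_le have bound: "norm (trace (S t)) \<le> (V 0 / lam) * exp (- (\<kappa> * t))" if "0 \<le> t" for t
    using that \<open>0 < lam\<close> trace_psd_mat_nonneg[OF S'(3)[OF that]] S'(4)[of t]
    by (simp add: field_simps) (smt (verit) mult.commute)
  have "((\<lambda>t::real. exp (- (\<kappa> * t))) \<longlongrightarrow> 0) at_top"
    using filterlim_compose[OF exp_at_bot filterlim_compose[OF filterlim_uminus_at_bot_at_top
        filterlim_tendsto_pos_mult_at_top[OF tendsto_const \<open>0 < \<kappa>\<close> filterlim_ident]]] .
  then have "((\<lambda>t. (V 0 / lam) * exp (- (\<kappa> * t))) \<longlongrightarrow> 0) at_top"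
    by (rule tendsto_mult_right_zero)
  moreover have "\<forall>\<^sub>F t in at_top. norm (trace (S t)) \<le> (V 0 / lam) * exp (- (\<kappa> * t))"
    by (rule eventually_mono[OF eventually_ge_at_top[of 0]]) (rule bound)
  ultimately show "((\<lambda>t. trace (S t)) \<longlongrightarrow> 0) at_top"
    by (rule Lim_null_comparison[rotated])
qed

lemma ms_stable_imp_lyap_pd:
  fixes A :: "real^'n^'n"
  assumes stable: "ms_stable A C r"
  obtains P lam where "psd_mat P" "lyap_op A C r P + mat 1 = 0"
    "0 < lam" "\<And>x. lam * (x \<bullet> x) \<le> x \<bullet> (P *v x)"
proof -
  obtain P where eq: "lyap_op A C r P + mat 1 = 0"
    using lyap_op_surj[OF stable, of "- mat 1"] by (auto simp: eq_neg_iff_add_eq_0)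
  have psd: "psd_mat P"
    by (rule lyap_op_solution_psd_unique(1)[OF stable _ eq]) (simp add: psd_mat_def sym_mat_def)
  have pos: "0 < x \<bullet> (P *v x)" if "x \<noteq> 0" for x
  proof (rule ccontr)
    assume "\<not> 0 < x \<bullet> (P *v x)"
    then have "P *v x = 0"
      using psd_matD(2)[OF psd, of x] by (intro psd_mat_quadratic_form_eq_0[OF psd]) simp
    then have "x \<bullet> (lyap_op A C r P *v x) = (\<Sum>l=1..r. (C l *v x) \<bullet> (P *v (C l *v x)))"
      by (simp add: quadratic_form_lyap_op inner_sym_matrix_commute[OF psd_matD(1)[OF psd], of x])
    also have "\<dots> \<ge> 0" by (intro sum_nonneg psd_matD(2)[OF psd])
    moreover have "x \<bullet> (lyap_op A C r P *v x) = - (x \<bullet> x)"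
      using eq by (simp add: eq_neg_iff_add_eq_0[symmetric] matrix_vector_mult_neg_left)
    ultimately show False using that inner_gt_zero_iff[of x] by linarith
  qed
  obtain lam where "0 < lam" "\<And>x. lam * (x \<bullet> x) \<le> x \<bullet> (P *v x)"
    using quadratic_form_pos_imp_coercive[OF pos] by blast
  then show ?thesis using that psd eq by blast
qed

section \<open>Policy improvement\<close>

lemma quadratic_form_lyap_op_diff:
  fixes P :: "real^'n^'n"
  assumes sym: "transpose P = P"
  shows "s \<bullet> (lyap_op A' C' r P *v s) = s \<bullet> (lyap_op A C r P *v s) + 2 * (((A' - A) *v s) \<bullet> (P *v s))
     + (\<Sum>l=1..r. 2 * (((C' l - C l) *v s) \<bullet> (P *v (C l *v s)))
                  + ((C' l - C l) *v s) \<bullet> (P *v ((C' l - C l) *v s)))"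
proof -
  define d0 where "d0 = (A' - A) *v s"
  define d where "d l = (C' l - C l) *v s" for l
  have A': "A' *v s = A *v s + d0" and C': "C' l *v s = C l *v s + d l" for l
    by (simp_all add: d0_def d_def matrix_vector_mult_diff_rdistrib)
  have "s \<bullet> (P *v d0) = d0 \<bullet> (P *v s)" "(C l *v s) \<bullet> (P *v d l) = d l \<bullet> (P *v (C l *v s))" for l
    by (simp_all add: inner_sym_matrix_commute[OF sym])
  then show ?thesis
    unfolding quadratic_form_lyap_op A' C' d0_def[symmetric] d_def[symmetric]
    by (simp add: matrix_vector_right_distrib inner_add_left inner_add_right sum.distrib algebra_simps)
qed

lemma quadratic_form_lyap_op_feedback:
  fixes Z :: "real^'n^'n" and K :: "real^'n^'m"
  assumes sym: "transpose Z = Z"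
  shows "s \<bullet> (lyap_op (A + B ** K) (\<lambda>l. C l + D l ** K) r Z *v s)
    = s \<bullet> (lyap_op A C r Z *v s)
      + 2 * ((K *v s) \<bullet> ((transpose B ** Z + (\<Sum>l=1..r. transpose (D l) ** Z ** C l)) *v s))
      + (K *v s) \<bullet> ((\<Sum>l=1..r. transpose (D l) ** Z ** D l) *v (K *v s))"
    (is "_ = ?rhs")
proof -
  have move: "(M *v u) \<bullet> (Z *v x) = u \<bullet> ((transpose M ** Z) *v x)" for M :: "real^'m^'n" and u x
    by (simp add: inner_matrix_vector_transpose flip: matrix_vector_mul_assoc)
  have "s \<bullet> (lyap_op (A + B ** K) (\<lambda>l. C l + D l ** K) r Z *v s)
      = s \<bullet> (lyap_op A C r Z *v s) + 2 * (((A + B ** K - A) *v s) \<bullet> (Z *v s))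
        + (\<Sum>l=1..r. 2 * (((C l + D l ** K - C l) *v s) \<bullet> (Z *v (C l *v s)))
            + ((C l + D l ** K - C l) *v s) \<bullet> (Z *v ((C l + D l ** K - C l) *v s)))"
    by (rule quadratic_form_lyap_op_diff[OF sym])
  also have "\<dots> = ?rhs"
    by (simp add: move matrix_vector_mult_add_rdistrib matrix_vector_mult_sum_left inner_add_right
        inner_sum_right sum.distrib sum_distrib_left algebra_simps flip: matrix_vector_mul_assoc)
  finally show ?thesis .
qed

lemma cross_term_le:
  fixes P :: "real^'n^'n"
  assumes "0 < \<eta>"
  shows "2 * (\<delta> \<bullet> (P *v x)) \<le> \<eta> * (norm x)^2 + (norm P)^2 / \<eta> * (norm \<delta>)^2"
proof -
  have "2 * (\<delta> \<bullet> (P *v x)) \<le> 2 * (norm \<delta> * (norm P * norm x))"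
    using Cauchy_Schwarz_ineq2[of \<delta> "P *v x"] norm_matrix_vector_mult_le[of P x]
    by (smt (verit) mult_left_mono norm_ge_zero)
  also have "\<dots> \<le> \<eta> * (norm x)^2 + (norm P)^2 / \<eta> * (norm \<delta>)^2"
  proof -
    have "0 \<le> (\<eta> * norm x - norm P * norm \<delta>)^2 / \<eta>" using assms by simp
    also have "\<dots> = \<eta> * (norm x)^2 - 2 * (norm \<delta> * (norm P * norm x)) + (norm P)^2 / \<eta> * (norm \<delta>)^2"
      using assms by (simp add: power2_eq_square field_simps)
    finally show ?thesis by simp
  qed
  finally show ?thesis .
qed

lemma norm_diff_matrix_vector_sq_le:
  fixes D :: "real^'m^'n" and \<Theta> :: "real^'p^'n"
  shows "(norm (D *v u - \<Theta> *v v))^2 \<le> (norm D + norm \<Theta>)^2 * ((norm u)^2 + (norm v)^2)"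
proof -
  have "norm (D *v u - \<Theta> *v v) \<le> norm D * norm u + norm \<Theta> * norm v"
    by (rule order_trans[OF norm_triangle_ineq4 add_mono[OF norm_matrix_vector_mult_le
          norm_matrix_vector_mult_le]])
  then have "(norm (D *v u - \<Theta> *v v))^2 \<le> (norm D * norm u + norm \<Theta> * norm v)^2"
    by (simp add: power_mono)
  also have "\<dots> = (norm D^2 + norm \<Theta>^2) * (norm u^2 + norm v^2) - (norm D * norm v - norm \<Theta> * norm u)^2"
    by (simp add: power2_eq_square algebra_simps)
  also have "\<dots> \<le> (norm D^2 + norm \<Theta>^2) * (norm u^2 + norm v^2)"
    by simp
  also have "\<dots> \<le> (norm D + norm \<Theta>)^2 * (norm u^2 + norm v^2)"
    by (intro mult_right_mono) (auto simp: power2_eq_square algebra_simps)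
  finally show ?thesis .
qed

lemma feedback_term_le:
  fixes P M :: "real^'n^'n"
  assumes "0 < \<eta>"
  shows "2 * (\<delta> \<bullet> (P *v (M *v s))) + \<delta> \<bullet> (P *v \<delta>)
    \<le> \<eta> * (norm M)^2 * (norm s)^2 + ((norm P)^2 / \<eta> + norm P) * (norm \<delta>)^2"
proof -
  have "\<eta> * (norm (M *v s))^2 \<le> \<eta> * ((norm M)^2 * (norm s)^2)"
    using assms by (intro mult_left_mono)
      (simp_all add: power_mono norm_matrix_vector_mult_le flip: power_mult_distrib)
  moreover have "\<delta> \<bullet> (P *v \<delta>) \<le> norm P * (norm \<delta>)^2"
    using abs_quadratic_form_le[of \<delta> P] by (simp add: power2_norm_eq_inner)
  ultimately show ?thesis
    using cross_term_le[OF assms, of \<delta> P "M *v s"] by (simp add: algebra_simps)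
qed

text \<open>Both closed loops \<open>(A + B K, C + D K)\<close> and \<open>(A + \<Theta> E\<^sub>0, C + \<Theta> E)\<close> act alike on the part
  of the state invisible to \<open>K\<close> and to the \<open>E\<^sub>l\<close>.\<close>

lemma lyap_op_perturbation_le:
  fixes P :: "real^'n^'n" and \<Theta> :: "real^'p^'n" and E :: "nat \<Rightarrow> real^'n^'p" and K :: "real^'n^'m"
    and r :: nat and s :: "real^'n"
  assumes sym: "transpose P = P" and "0 < \<eta>"
  defines "W \<equiv> (norm (K *v s))^2 + (\<Sum>l=0..r. (norm (E l *v s))^2)"
  shows "s \<bullet> (lyap_op (A + B ** K) (\<lambda>l. C l + D l ** K) r P *v s)
    \<le> s \<bullet> (lyap_op (A + \<Theta> ** E 0) (\<lambda>l. C l + \<Theta> ** E l) r P *v s)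
       + \<eta> * (1 + (\<Sum>l=1..r. (norm (C l + \<Theta> ** E l))^2)) * (norm s)^2
       + ((norm P)^2 / \<eta> + norm P) * ((norm B + norm \<Theta>)^2 + (\<Sum>l=1..r. (norm (D l) + norm \<Theta>)^2)) * W"
proof -
  define k where "k = (norm P)^2 / \<eta> + norm P"
  have "0 \<le> (norm P)^2 / \<eta>" using \<open>0 < \<eta>\<close> by simp
  have delta: "(norm (F *v (K *v s) - \<Theta> *v (E l *v s)))^2 \<le> (norm F + norm \<Theta>)^2 * W"
    if "l \<le> r" for l and F :: "real^'m^'n"
  proof (rule order_trans[OF norm_diff_matrix_vector_sq_le mult_left_mono])
    show "(norm (K *v s))^2 + (norm (E l *v s))^2 \<le> W"
      using member_le_sum[of l "{0..r}" "\<lambda>l. (norm (E l *v s))^2"] that by (simp add: W_def)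
  qed simp
  define d0 where "d0 = B *v (K *v s) - \<Theta> *v (E 0 *v s)"
  define d where "d l = D l *v (K *v s) - \<Theta> *v (E l *v s)" for l
  have "(A + B ** K - (A + \<Theta> ** E 0)) *v s = d0" "(C l + D l ** K - (C l + \<Theta> ** E l)) *v s = d l" for l
    by (simp_all add: d0_def d_def matrix_vector_mult_diff_rdistrib flip: matrix_vector_mul_assoc)
  then have expand: "s \<bullet> (lyap_op (A + B ** K) (\<lambda>l. C l + D l ** K) r P *v s)
      = s \<bullet> (lyap_op (A + \<Theta> ** E 0) (\<lambda>l. C l + \<Theta> ** E l) r P *v s) + 2 * (d0 \<bullet> (P *v s))
        + (\<Sum>l=1..r. 2 * (d l \<bullet> (P *v ((C l + \<Theta> ** E l) *v s))) + d l \<bullet> (P *v d l))"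
    using quadratic_form_lyap_op_diff[OF sym, of s "A + B ** K" "\<lambda>l. C l + D l ** K" r
        "A + \<Theta> ** E 0" "\<lambda>l. C l + \<Theta> ** E l"]
    by (simp only:)
  have drift: "2 * (d0 \<bullet> (P *v s)) \<le> \<eta> * (norm s)^2 + k * ((norm B + norm \<Theta>)^2 * W)"
  proof -
    have "(norm P)^2 / \<eta> * (norm d0)^2 \<le> k * ((norm B + norm \<Theta>)^2 * W)"
      using delta[of 0 B] \<open>0 \<le> (norm P)^2 / \<eta>\<close>
      by (intro mult_mono) (simp_all add: d0_def k_def)
    then show ?thesis using cross_term_le[OF \<open>0 < \<eta>\<close>, of d0 P s] by simp
  qed
  have noise: "(\<Sum>l=1..r. 2 * (d l \<bullet> (P *v ((C l + \<Theta> ** E l) *v s))) + d l \<bullet> (P *v d l))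
      \<le> (\<Sum>l=1..r. \<eta> * (norm (C l + \<Theta> ** E l))^2 * (norm s)^2 + k * ((norm (D l) + norm \<Theta>)^2 * W))"
  proof (rule sum_mono)
    fix l assume "l \<in> {1..r}"
    have "k * (norm (d l))^2 \<le> k * ((norm (D l) + norm \<Theta>)^2 * W)"
      using delta[of l "D l"] \<open>l \<in> {1..r}\<close> \<open>0 \<le> (norm P)^2 / \<eta>\<close>
      by (intro mult_left_mono) (simp_all add: d_def k_def)
    then show "2 * (d l \<bullet> (P *v ((C l + \<Theta> ** E l) *v s))) + d l \<bullet> (P *v d l)
        \<le> \<eta> * (norm (C l + \<Theta> ** E l))^2 * (norm s)^2 + k * ((norm (D l) + norm \<Theta>)^2 * W)"
      using feedback_term_le[OF \<open>0 < \<eta>\<close>, of "d l" P "C l + \<Theta> ** E l" s] by (simp add: k_def)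
  qed
  have "(\<Sum>l=1..r. \<eta> * (norm (C l + \<Theta> ** E l))^2 * (norm s)^2 + k * ((norm (D l) + norm \<Theta>)^2 * W))
      = \<eta> * (1 + (\<Sum>l=1..r. (norm (C l + \<Theta> ** E l))^2)) * (norm s)^2 - \<eta> * (norm s)^2
        + k * ((norm B + norm \<Theta>)^2 + (\<Sum>l=1..r. (norm (D l) + norm \<Theta>)^2)) * W
        - k * ((norm B + norm \<Theta>)^2 * W)"
    by (simp add: sum.distrib sum_distrib_left sum_distrib_right algebra_simps)
  with expand drift noise show ?thesis
    unfolding k_def[symmetric] by linarith
qed

text \<open>Completing the square: \<open>K'\<close> minimizes the quadratic form of \<open>\<L>\<^sub>K Z + K\<^sup>T R K\<close> over \<open>K\<close>.\<close>

lemma policy_improve_completion_of_squares: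
  fixes Z :: "real^'n^'n" and K K' :: "real^'n^'m" and R :: "real^'m^'m"
    and B :: "real^'m^'n" and C :: "nat \<Rightarrow> real^'n^'n" and D :: "nat \<Rightarrow> real^'m^'n" and r :: nat
  assumes Z_sym: "transpose Z = Z" and R_sym: "transpose R = R"
  defines "Rt \<equiv> R + (\<Sum>l=1..r. transpose (D l) ** Z ** D l)"
    and "N \<equiv> transpose B ** Z + (\<Sum>l=1..r. transpose (D l) ** Z ** C l)"
  assumes gain: "Rt ** K' = - N"
    and old: "s \<bullet> (lyap_op (A + B ** K) (\<lambda>l. C l + D l ** K) r Z *v s) + s \<bullet> (M *v s)
      + (K *v s) \<bullet> (R *v (K *v s)) = 0"
  shows "s \<bullet> (lyap_op (A + B ** K') (\<lambda>l. C l + D l ** K') r Z *v s) + s \<bullet> (M *v s)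
      + (K' *v s) \<bullet> (R *v (K' *v s)) = - ((K *v s - K' *v s) \<bullet> (Rt *v (K *v s - K' *v s)))"
proof -
  define u where "u = K *v s"
  define u' where "u' = K' *v s"
  define x where "x = s \<bullet> (lyap_op A C r Z *v s) + s \<bullet> (M *v s)"
  have "N *v s = - (Rt *v u')"
    using arg_cong[OF gain, of "\<lambda>X. X *v s"]
    by (simp add: u'_def matrix_vector_mult_neg_left flip: matrix_vector_mul_assoc)
  then have N: "v \<bullet> (N *v s) = - (v \<bullet> (Rt *v u'))" for v by simp
  have Rt: "v \<bullet> ((\<Sum>l=1..r. transpose (D l) ** Z ** D l) *v v) + v \<bullet> (R *v v) = v \<bullet> (Rt *v v)" for v
    by (simp add: Rt_def matrix_vector_mult_add_rdistrib inner_add_right)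
  have "transpose Rt = Rt"
    by (simp add: Rt_def transpose_add transpose_sum matrix_transpose_mul R_sym Z_sym matrix_mul_assoc)
  then have sym: "u' \<bullet> (Rt *v u) = u \<bullet> (Rt *v u')" by (rule inner_sym_matrix_commute)
  have "x - 2 * (u \<bullet> (Rt *v u')) + u \<bullet> (Rt *v u) = 0"
    using old quadratic_form_lyap_op_feedback[OF Z_sym, of s A B K C D r] N[of u] Rt[of u]
    unfolding x_def u_def N_def[symmetric] by linarith
  moreover have "s \<bullet> (lyap_op (A + B ** K') (\<lambda>l. C l + D l ** K') r Z *v s) + s \<bullet> (M *v s)
      + (K' *v s) \<bullet> (R *v (K' *v s)) = x - 2 * (u' \<bullet> (Rt *v u')) + u' \<bullet> (Rt *v u')"
    using quadratic_form_lyap_op_feedback[OF Z_sym, of s A B K' C D r] N[of u'] Rt[of u']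
    unfolding x_def u'_def N_def[symmetric] by linarith
  moreover have "(u - u') \<bullet> (Rt *v (u - u'))
      = u \<bullet> (Rt *v u) - u \<bullet> (Rt *v u') - u' \<bullet> (Rt *v u) + u' \<bullet> (Rt *v u')"
    by (simp add: matrix_vector_mult_diff_distrib inner_diff_left inner_diff_right)
  ultimately show ?thesis using sym unfolding u_def u'_def by linarith
qed

lemma policy_improve_gain:
  fixes R :: "real^'m^'m" and Z :: "real^'n^'n" and D :: "nat \<Rightarrow> real^'m^'n" and r :: nat
  assumes "pd_mat R" and "psd_mat Z"
  defines "Rt \<equiv> R + (\<Sum>l=1..r. transpose (D l) ** Z ** D l)"
  shows "pd_mat Rt"
    and "Rt ** policy_improve A C B D r R Z = - (transpose B ** Z + (\<Sum>l=1..r. transpose (D l) ** Z ** C l))"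
proof -
  have "x \<bullet> (Rt *v x) = x \<bullet> (R *v x) + (\<Sum>l=1..r. (D l *v x) \<bullet> (Z *v (D l *v x)))" for x
    by (simp add: Rt_def matrix_vector_mult_add_rdistrib matrix_vector_mult_sum_left inner_add_right
        inner_sum_right quadratic_form_congruence[symmetric] matrix_mul_assoc)
  moreover have "0 \<le> (\<Sum>l=1..r. (D l *v x) \<bullet> (Z *v (D l *v x)))" for x
    by (intro sum_nonneg psd_matD(2)[OF \<open>psd_mat Z\<close>])
  ultimately have pos: "0 < x \<bullet> (Rt *v x)" if "x \<noteq> 0" for x
    using \<open>pd_mat R\<close> that unfolding pd_mat_def by (smt (verit))
  moreover have "transpose Rt = Rt"
    using \<open>pd_mat R\<close> psd_matD(1)[OF \<open>psd_mat Z\<close>]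
    by (simp add: Rt_def pd_mat_def sym_mat_def transpose_add transpose_sum matrix_transpose_mul
        matrix_mul_assoc)
  ultimately show "pd_mat Rt" by (simp add: pd_mat_def sym_mat_def)
  have "\<exists>L. L ** Rt = mat 1"
    unfolding matrix_left_invertible_ker using pos by force
  then have "Rt ** matrix_inv Rt = mat 1"
    by (simp add: invertible_left_inverse matrix_mul_matrix_inv)
  moreover have "policy_improve A C B D r R Z
      = - (matrix_inv Rt ** (transpose B ** Z + (\<Sum>l=1..r. transpose (D l) ** Z ** C l)))"
    unfolding policy_improve_def Rt_def ..
  ultimately show "Rt ** policy_improve A C B D r R Z
      = - (transpose B ** Z + (\<Sum>l=1..r. transpose (D l) ** Z ** C l))"
    by (simp add: matrix_neg_right matrix_mul_assoc)
qed

lemma output_injection_lyap_bound: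
  fixes E :: "nat \<Rightarrow> real^'n^'p" and \<Theta> :: "real^'p^'n" and K :: "real^'n^'m"
  assumes detect: "ms_stable (A + \<Theta> ** E 0) (\<lambda>l. C l + \<Theta> ** E l) r"
  obtains P lam c where "psd_mat P" "0 < lam" "\<And>x. lam * (x \<bullet> x) \<le> x \<bullet> (P *v x)" "0 \<le> c"
    "\<And>s. s \<bullet> (lyap_op (A + B ** K) (\<lambda>l. C l + D l ** K) r P *v s)
      \<le> - (1/2) * (norm s)^2 + c * ((norm (K *v s))^2 + (\<Sum>l=0..r. (norm (E l *v s))^2))"
proof -
  obtain P lam where "psd_mat P" and P_eq: "lyap_op (A + \<Theta> ** E 0) (\<lambda>l. C l + \<Theta> ** E l) r P + mat 1 = 0"
    and "0 < lam" and lam: "\<And>x. lam * (x \<bullet> x) \<le> x \<bullet> (P *v x)"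
    by (rule ms_stable_imp_lyap_pd[OF detect]) blast
  define \<eta> where "\<eta> = 1 / (2 * (1 + (\<Sum>l=1..r. (norm (C l + \<Theta> ** E l))^2)))"
  define c where "c = ((norm P)^2 / \<eta> + norm P) * ((norm B + norm \<Theta>)^2 + (\<Sum>l=1..r. (norm (D l) + norm \<Theta>)^2))"
  have \<eta>_eq: "\<eta> * (1 + (\<Sum>l=1..r. (norm (C l + \<Theta> ** E l))^2)) = 1/2"
    using sum_nonneg[of "{1..r}" "\<lambda>l. (norm (C l + \<Theta> ** E l))^2"] by (simp add: \<eta>_def)
  have P_form: "s \<bullet> (lyap_op (A + \<Theta> ** E 0) (\<lambda>l. C l + \<Theta> ** E l) r P *v s) = - ((norm s)^2)" for s
    using P_eq by (simp add: eq_neg_iff_add_eq_0[symmetric] matrix_vector_mult_neg_left power2_norm_eq_inner)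
  have "0 < \<eta>" by (simp add: \<eta>_def add_pos_nonneg sum_nonneg)
  have "s \<bullet> (lyap_op (A + B ** K) (\<lambda>l. C l + D l ** K) r P *v s)
      \<le> - (1/2) * (norm s)^2 + c * ((norm (K *v s))^2 + (\<Sum>l=0..r. (norm (E l *v s))^2))" for s
  proof -
    note lyap_op_perturbation_le[OF psd_matD(1)[OF \<open>psd_mat P\<close>] \<open>0 < \<eta>\<close>,
        where A = A and B = B and K = K and C = C and D = D and r = r and \<Theta> = \<Theta> and E = E and s = s]
    moreover have "\<eta> * (1 + (\<Sum>l=1..r. (norm (C l + \<Theta> ** E l))^2)) * (norm s)^2 = (1/2) * (norm s)^2"
      by (simp only: \<eta>_eq)
    ultimately show ?thesis using P_form[of s] unfolding c_def by linarith
  qed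
  moreover have "0 \<le> c" using \<open>0 < \<eta>\<close> by (simp add: c_def sum_nonneg)
  ultimately show ?thesis using that \<open>psd_mat P\<close> \<open>0 < lam\<close> lam by blast
qed

lemma policy_improve_lyap_decrease:
  fixes R :: "real^'m^'m" and Z M :: "real^'n^'n" and K :: "real^'n^'m"
  assumes "pd_mat R" and "psd_mat Z"
    and old: "lyap_op (A + B ** K) (\<lambda>l. C l + D l ** K) r Z + (M + transpose K ** R ** K) = 0"
  defines "K' \<equiv> policy_improve A C B D r R Z"
  obtains \<rho> where "0 < \<rho>"
    "\<And>s. s \<bullet> (lyap_op (A + B ** K') (\<lambda>l. C l + D l ** K') r Z *v s) \<le> - (s \<bullet> (M *v s)) - \<rho> * (norm (K' *v s))^2"
proof -
  obtain \<rho> where "0 < \<rho>" and \<rho>: "\<And>x. \<rho> * (x \<bullet> x) \<le> x \<bullet> (R *v x)"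
    using quadratic_form_pos_imp_coercive[of R] \<open>pd_mat R\<close> by (auto simp: pd_mat_def)
  note Rt_pd = policy_improve_gain(1)[OF \<open>pd_mat R\<close> \<open>psd_mat Z\<close>, where D = D and r = r]
  note gain = policy_improve_gain(2)[OF \<open>pd_mat R\<close> \<open>psd_mat Z\<close>, where A = A and B = B and C = C and D = D and r = r]
  have "s \<bullet> (lyap_op (A + B ** K') (\<lambda>l. C l + D l ** K') r Z *v s) \<le> - (s \<bullet> (M *v s)) - \<rho> * (norm (K' *v s))^2"
    for s
  proof -
    have "s \<bullet> ((lyap_op (A + B ** K) (\<lambda>l. C l + D l ** K) r Z + (M + transpose K ** R ** K)) *v s) = 0"
      by (simp add: old)
    then have "s \<bullet> (lyap_op (A + B ** K) (\<lambda>l. C l + D l ** K) r Z *v s) + s \<bullet> (M *v s)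
        + (K *v s) \<bullet> (R *v (K *v s)) = 0"
      by (simp add: matrix_vector_mult_add_rdistrib inner_add_right quadratic_form_congruence add.assoc)
    note square = policy_improve_completion_of_squares[OF psd_matD(1)[OF \<open>psd_mat Z\<close>]
        psd_matD(1)[OF pd_mat_imp_psd_mat[OF \<open>pd_mat R\<close>]] gain this]
    have "s \<bullet> (lyap_op (A + B ** K') (\<lambda>l. C l + D l ** K') r Z *v s) + s \<bullet> (M *v s)
        + (K' *v s) \<bullet> (R *v (K' *v s)) \<le> 0"
      using square psd_matD(2)[OF pd_mat_imp_psd_mat[OF Rt_pd], of "K *v s - K' *v s"]
      unfolding K'_def by linarith
    then show ?thesis using \<rho>[of "K' *v s"] by (simp add: power2_norm_eq_inner)
  qed
  with \<open>0 < \<rho>\<close> that show ?thesis by blast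
qed

text \<open>\<open>Z + \<epsilon> P\<close> is a Lyapunov function of the improved loop: \<open>Z\<close> decreases at the rate of the
  observed quantities \<open>\<Sum>\<^sub>l |E\<^sub>l x|\<^sup>2 + \<rho> |K' x|\<^sup>2\<close>, and \<open>P\<close>, taken from the detectability loop, decreases
  at the rate \<open>|x|\<^sup>2\<close> up to a multiple of those same quantities.\<close>

lemma policy_improve_ms_stable:
  fixes R :: "real^'m^'m" and Z M :: "real^'n^'n" and K :: "real^'n^'m"
    and E :: "nat \<Rightarrow> real^'n^'p" and \<Theta> :: "real^'p^'n"
  assumes "pd_mat R" and "psd_mat Z"
    and M_eq: "(\<Sum>l=0..r. transpose (E l) ** E l) = M"
    and detect: "ms_stable (A + \<Theta> ** E 0) (\<lambda>l. C l + \<Theta> ** E l) r"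
    and old: "lyap_op (A + B ** K) (\<lambda>l. C l + D l ** K) r Z + (M + transpose K ** R ** K) = 0"
  defines "K' \<equiv> policy_improve A C B D r R Z"
  shows "ms_stable (A + B ** K') (\<lambda>l. C l + D l ** K') r"
proof -
  obtain \<rho> where "0 < \<rho>" and decZ: "\<And>s. s \<bullet> (lyap_op (A + B ** K') (\<lambda>l. C l + D l ** K') r Z *v s)
      \<le> - (s \<bullet> (M *v s)) - \<rho> * (norm (K' *v s))^2"
    using policy_improve_lyap_decrease[OF \<open>pd_mat R\<close> \<open>psd_mat Z\<close> old] unfolding K'_def by blast
  obtain P lam c where "psd_mat P" "0 < lam" and lam: "\<And>x. lam * (x \<bullet> x) \<le> x \<bullet> (P *v x)" and "0 \<le> c"
    and decP: "\<And>s. s \<bullet> (lyap_op (A + B ** K') (\<lambda>l. C l + D l ** K') r P *v s)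
      \<le> - (1/2) * (norm s)^2 + c * ((norm (K' *v s))^2 + (\<Sum>l=0..r. (norm (E l *v s))^2))"
    by (rule output_injection_lyap_bound[OF detect, where B = B and K = K' and D = D]) blast
  define m where "m = min 1 \<rho>"
  define \<epsilon> where "\<epsilon> = m / (c + 1)"
  have "0 < m" "m \<le> 1" "m \<le> \<rho>" using \<open>0 < \<rho>\<close> by (auto simp: m_def)
  then have "0 < \<epsilon>" using \<open>0 \<le> c\<close> by (simp add: \<epsilon>_def)
  have "\<epsilon> * c = m * (c / (c + 1))" by (simp add: \<epsilon>_def)
  also have "\<dots> \<le> m * 1" using \<open>0 < m\<close> \<open>0 \<le> c\<close> by (intro mult_left_mono) simp_all
  finally have "\<epsilon> * c \<le> m" by simp
  define Y where "Y = Z + \<epsilon> *\<^sub>R P"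
  have Y: "x \<bullet> (Y *v x) = x \<bullet> (Z *v x) + \<epsilon> * (x \<bullet> (P *v x))"
    "x \<bullet> (lyap_op A' C' r Y *v x) = x \<bullet> (lyap_op A' C' r Z *v x) + \<epsilon> * (x \<bullet> (lyap_op A' C' r P *v x))"
    for x A' C'
    by (simp_all add: Y_def linear_add[OF linear_lyap_op] linear_scale[OF linear_lyap_op]
        matrix_vector_mult_add_rdistrib matrix_vector_mult_scaleR_left inner_add_right)
  show ?thesis
  proof (rule ms_stable_if_lyap_function)
    show "\<epsilon> * lam * (x \<bullet> x) \<le> x \<bullet> (Y *v x)" for x
      using lam[of x] psd_matD(2)[OF \<open>psd_mat Z\<close>, of x] \<open>0 < \<epsilon>\<close>
      by (simp add: Y mult.assoc add_increasing mult_left_mono)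
    show "x \<bullet> (lyap_op (A + B ** K') (\<lambda>l. C l + D l ** K') r Y *v x) \<le> - (\<epsilon> / 2) * (x \<bullet> x)" for x
    proof -
      define k where "k = (norm (K' *v x))^2"
      define q where "q = (\<Sum>l=0..r. (norm (E l *v x))^2)"
      have "0 \<le> k" "0 \<le> q" by (simp_all add: k_def q_def sum_nonneg)
      have "x \<bullet> (M *v x) = q"
        by (simp add: q_def M_eq[symmetric] quadratic_form_sum_transpose_mult)
      then have Z: "x \<bullet> (lyap_op (A + B ** K') (\<lambda>l. C l + D l ** K') r Z *v x) \<le> - q - \<rho> * k"
        using decZ[of x] by (simp add: k_def)
      have "\<epsilon> * (x \<bullet> (lyap_op (A + B ** K') (\<lambda>l. C l + D l ** K') r P *v x))
          \<le> \<epsilon> * (- (x \<bullet> x) / 2 + c * (k + q))"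
        using decP[of x] \<open>0 < \<epsilon>\<close> by (simp add: k_def q_def power2_norm_eq_inner mult_left_mono)
      also have "\<dots> = - (\<epsilon> / 2) * (x \<bullet> x) + (\<epsilon> * c) * (k + q)"
        by (simp add: algebra_simps)
      also have "(\<epsilon> * c) * (k + q) \<le> \<rho> * k + q"
        using mult_right_mono[OF \<open>\<epsilon> * c \<le> m\<close>, of "k + q"] mult_right_mono[OF \<open>m \<le> \<rho>\<close> \<open>0 \<le> k\<close>]
          mult_right_mono[OF \<open>m \<le> 1\<close> \<open>0 \<le> q\<close>] \<open>0 \<le> k\<close> \<open>0 \<le> q\<close>
        by (simp add: distrib_left)
      finally show ?thesis using Z by (simp add: Y)
    qed
  qed (use \<open>0 < \<epsilon>\<close> \<open>0 < lam\<close> in auto)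
qed

lemma policy_eval_eq_iff_lyap_op:
  "policy_eval_eq A C B D r M R K Z \<longleftrightarrow>
     lyap_op (A + B ** K) (\<lambda>l. C l + D l ** K) r Z + (M + transpose K ** R ** K) = 0"
  unfolding policy_eval_eq_def lyap_op_def by (simp add: add.assoc)

theorem lemma1:
  fixes A :: "real^'n^'n" and C :: "nat \<Rightarrow> real^'n^'n"
    and B2 :: "real^'m^'n" and D2 :: "nat \<Rightarrow> real^'m^'n"
    and M :: "real^'n^'n" and R22 :: "real^'m^'m" and r :: nat
    and E :: "nat \<Rightarrow> real^'n^'p"
    and K2 :: "nat \<Rightarrow> real^'n^'m" and Z :: "nat \<Rightarrow> real^'n^'n"
  assumes R22_pd: "pd_mat R22"
    and M_sym: "sym_mat M"
    and K0: "K2 0 \<in> stabilizers A C B2 D2 r"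
    and E_sum: "(\<Sum>l=0..r. transpose (E l) ** E l) = M"
    and detect: "stoch_detectable E A C r"
    and eval: "\<And>j. policy_eval_eq A C B2 D2 r M R22 (K2 j) (Z (Suc j))"
    and improve: "\<And>j. K2 (Suc j) = policy_improve A C B2 D2 r R22 (Z (Suc j))"
  shows "\<forall>j. K2 j \<in> stabilizers A C B2 D2 r
            \<and> psd_mat (Z (Suc j))
            \<and> (\<forall>Z'. psd_mat Z' \<and> policy_eval_eq A C B2 D2 r M R22 (K2 j) Z' \<longrightarrow> Z' = Z (Suc j))"
proof -
  obtain \<Theta> :: "real^'p^'n" where \<Theta>: "ms_stable (A + \<Theta> ** E 0) (\<lambda>l. C l + \<Theta> ** E l) r"
    using detect by (auto simp: stoch_detectable_def)
  have "0 \<le> x \<bullet> (M *v x)" for x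
    by (simp add: E_sum[symmetric] quadratic_form_sum_transpose_mult sum_nonneg)
  then have Q_psd: "psd_mat (M + transpose (K2 j) ** R22 ** K2 j)" for j
    using M_sym psd_matD[OF pd_mat_imp_psd_mat[OF R22_pd]]
    by (simp add: psd_mat_def sym_mat_def transpose_add matrix_transpose_mul matrix_mul_assoc
        matrix_vector_mult_add_rdistrib inner_add_right quadratic_form_congruence add_nonneg_nonneg)
  note eval_lyap = eval[unfolded policy_eval_eq_iff_lyap_op]
  note evaluation = lyap_op_solution_psd_unique[OF _ Q_psd eval_lyap]
  have stable: "K2 j \<in> stabilizers A C B2 D2 r" for j
  proof (induction j)
    case (Suc j)
    then have "psd_mat (Z (Suc j))" by (intro evaluation(1)) (simp add: stabilizers_def)
    from policy_improve_ms_stable[OF R22_pd this E_sum \<Theta> eval_lyap[of j]]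
    show ?case by (simp add: stabilizers_def improve[of j])
  qed (rule K0)
  then have "ms_stable (A + B2 ** K2 j) (\<lambda>l. C l + D2 l ** K2 j) r" for j
    by (simp add: stabilizers_def)
  then show ?thesis
    using stable evaluation by (auto simp: policy_eval_eq_iff_lyap_op)
qed

end
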